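(* Let $(X,\sigma_X)$, $(Y,\sigma_Y)$ be one-sided full shifts and $\pi:X\to Y$ a one-block factor map. Let $f\in Bow(X)$, $\mu_f$ its unique invariant Gibbs measure, $f_n(x)=e^{f(x)+\cdots+f(\sigma_X^{n-1}x)}$, and $\bar g_n(y)=\sup_{E_n(y)}\sum_{x\in E_n(y)}f_n(x)$. Suppose there exists $A>0$ such that $$\frac1A\le\frac{\bar g_n(y)}{|\pi^{-1}[y_1\cdots y_n]|\,f_n(x)}\le A$$ for all $n$, $y\in Y$, and all $x\in[x_1\cdots x_n]$ with $\pi([x_1\cdots x_n])\subseteq[y_1\cdots y_n]$. Then $\nu=\pi\mu_f$ is the unique invariant Gibbs measure for a continuous function on $Y$ belonging to $Bow(Y)$.
   Context: Full shift: $\{1,\dots,k\}^{\mathbb N}$ with left shift. One-block factor map: continuous surjection commuting with shifts, $\pi(x)_i$ depending only on $x_i$. $Bow(Z)=\{f\in C(Z):\sup_n\sup\{S_nf(z)-S_nf(z'):z_i=z'_i,1\le i\le n\}<\infty\}$, $S_nf=\sum_{i=0}^{n-1}f\circ\sigma^i$; such $f$ has a unique invariant Gibbs measure ($\mu$ invariant with $C_0^{-1}<\mu([z_1\cdots z_n])/e^{-nP(f)+S_nf(z)}<C_0$ for all $z,n$). $E_n(y)$: any set with exactly one point from each cylinder $[x_1\cdots x_n]$ of $X$ with $\pi([x_1\cdots x_n])\subseteq[y_1\cdots y_n]$; the sup is over all such choices. $|\pi^{-1}[y_1\cdots y_n]|$ is the number of such cylinders. *)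

theory Defs
  imports "HOL-Probability.Probability"
begin

text \<open>One-sided full shift on the alphabet {1..k}, as a subset of nat \<Rightarrow> nat carrying the
  product topology (Function_Topology). Coordinates are indexed from 0, so the paper's
  word x_1 ... x_n corresponds to x 0, ..., x (n-1).\<close>

definition fullshift :: "nat \<Rightarrow> (nat \<Rightarrow> nat) set" where
  "fullshift k = {x. \<forall>i. x i \<in> {1..k}}"

definition shift :: "(nat \<Rightarrow> nat) \<Rightarrow> (nat \<Rightarrow> nat)" where
  "shift x = (\<lambda>i. x (Suc i))"

definition cyl :: "nat \<Rightarrow> (nat \<Rightarrow> nat) \<Rightarrow> nat \<Rightarrow> (nat \<Rightarrow> nat) set" where
  "cyl k x n = {z \<in> fullshift k. \<forall>i<n. z i = x i}"

definition birkhoff :: "((nat \<Rightarrow> nat) \<Rightarrow> real) \<Rightarrow> nat \<Rightarrow> (nat \<Rightarrow> nat) \<Rightarrow> real" where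
  "birkhoff f n x = (\<Sum>i<n. f ((shift ^^ i) x))"

definition Bow :: "nat \<Rightarrow> ((nat \<Rightarrow> nat) \<Rightarrow> real) set" where
  "Bow k = {f. continuous_on (fullshift k) f \<and>
     (\<exists>B. \<forall>n. \<forall>z\<in>fullshift k. \<forall>z'\<in>fullshift k. (\<forall>i<n. z i = z' i) \<longrightarrow>
              birkhoff f n z - birkhoff f n z' \<le> B)}"

definition shift_borel :: "nat \<Rightarrow> (nat \<Rightarrow> nat) measure" where
  "shift_borel k = restrict_space borel (fullshift k)"

definition shift_invariant :: "(nat \<Rightarrow> nat) measure \<Rightarrow> bool" where
  "shift_invariant M \<longleftrightarrow> shift \<in> measurable M M \<and> distr M M shift = M"

text \<open>Invariant Gibbs measure for f on the full shift on k symbols (Bowen's definition,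
  the constant P being necessarily the topological pressure P(f)).\<close>
definition inv_gibbs :: "nat \<Rightarrow> ((nat \<Rightarrow> nat) \<Rightarrow> real) \<Rightarrow> (nat \<Rightarrow> nat) measure \<Rightarrow> bool" where
  "inv_gibbs k f M \<longleftrightarrow> prob_space M \<and> sets M = sets (shift_borel k) \<and> shift_invariant M \<and>
     (\<exists>P C0. C0 > 0 \<and> (\<forall>z\<in>fullshift k. \<forall>n.
         1 / C0 < measure M (cyl k z n) / exp (- real n * P + birkhoff f n z) \<and>
         measure M (cyl k z n) / exp (- real n * P + birkhoff f n z) < C0))"

definition one_block_factor :: "nat \<Rightarrow> nat \<Rightarrow> ((nat \<Rightarrow> nat) \<Rightarrow> (nat \<Rightarrow> nat)) \<Rightarrow> bool" where
  "one_block_factor k l \<pi> \<longleftrightarrow> \<pi> ` fullshift k = fullshift l \<and> continuous_on (fullshift k) \<pi> \<and>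
     (\<forall>x\<in>fullshift k. \<pi> (shift x) = shift (\<pi> x)) \<and>
     (\<exists>\<phi>. \<forall>x\<in>fullshift k. \<forall>i. \<pi> x i = \<phi> (x i))"

text \<open>The cylinders [x_1...x_n] of X with \<pi>([x_1...x_n]) \<subseteq> [y_1...y_n];
  their number is |\<pi>^{-1}[y_1...y_n]|.\<close>
definition preimage_cyls ::
  "nat \<Rightarrow> nat \<Rightarrow> ((nat \<Rightarrow> nat) \<Rightarrow> (nat \<Rightarrow> nat)) \<Rightarrow> nat \<Rightarrow> (nat \<Rightarrow> nat) \<Rightarrow> (nat \<Rightarrow> nat) set set" where
  "preimage_cyls k l \<pi> n y = {c. \<exists>x\<in>fullshift k. c = cyl k x n \<and> \<pi> ` c \<subseteq> cyl l y n}"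

definition E_sets ::
  "nat \<Rightarrow> nat \<Rightarrow> ((nat \<Rightarrow> nat) \<Rightarrow> (nat \<Rightarrow> nat)) \<Rightarrow> nat \<Rightarrow> (nat \<Rightarrow> nat) \<Rightarrow> (nat \<Rightarrow> nat) set set" where
  "E_sets k l \<pi> n y = {E. E \<subseteq> \<Union> (preimage_cyls k l \<pi> n y) \<and>
      (\<forall>c\<in>preimage_cyls k l \<pi> n y. \<exists>!x. x \<in> E \<and> x \<in> c)}"

definition gbar ::
  "nat \<Rightarrow> nat \<Rightarrow> ((nat \<Rightarrow> nat) \<Rightarrow> (nat \<Rightarrow> nat)) \<Rightarrow> ((nat \<Rightarrow> nat) \<Rightarrow> real) \<Rightarrow> nat \<Rightarrow> (nat \<Rightarrow> nat) \<Rightarrow> real" where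
  "gbar k l \<pi> f n y = (SUP E \<in> E_sets k l \<pi> n y. \<Sum>x\<in>E. exp (birkhoff f n x))"

end

theory Submission
  imports Defs
begin

text \<open>
  Lift y \<in> Y symbol by symbol to a point lift y of X and put g(y) = f(lift y) + ln |\<phi>^-1(y_0)|,
  where \<phi> is the symbol map of \<pi>. Then exp S_n g(y) = |\<pi>^-1[y_1 ... y_n]| exp S_n f(lift y).
  The \<nu>-measure of [y_1 ... y_n] is the \<mu>-measure of its preimage cylinders, so the Gibbs property
  of \<mu> makes it comparable to exp(-nP) gbar_n(y), and the hypothesis makes gbar_n(y) comparable
  to exp S_n g(y): \<nu> is a Gibbs measure for g, and g inherits the Bowen property from f.

  Uniqueness: two Gibbs measures for the same potential have the same pressure, hence bound each
  other by a constant factor on cylinder sets and, by approximation, on all Borel sets. So one is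
  a bounded density times the other, and this density is shift invariant. Gibbs measures are
  ergodic, since up to a constant factor they make events on disjoint blocks of coordinates at
  least independent; hence the density is 1.
\<close>

section \<open>Cylinders\<close>

definition cyls :: "nat \<Rightarrow> nat \<Rightarrow> (nat \<Rightarrow> nat) set set" where
  "cyls l n = (\<lambda>x. cyl l x n) ` fullshift l"

definition cyl_algebra :: "nat \<Rightarrow> nat \<Rightarrow> (nat \<Rightarrow> nat) set set" where
  "cyl_algebra l n = {A. A \<subseteq> fullshift l \<and>
     (\<forall>x\<in>fullshift l. \<forall>z\<in>fullshift l. (\<forall>i<n. x i = z i) \<longrightarrow> (x \<in> A \<longleftrightarrow> z \<in> A))}"

lemma cyl_subset_fullshift: "cyl l x n \<subseteq> fullshift l"
  by (auto simp: cyl_def)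

lemma cyl_self: "x \<in> fullshift l \<Longrightarrow> x \<in> cyl l x n"
  by (auto simp: cyl_def)

lemma cyl_cong: "(\<And>i. i < n \<Longrightarrow> x i = z i) \<Longrightarrow> cyl l x n = cyl l z n"
  by (auto simp: cyl_def)

lemma cyl_eq_if_mem: "z \<in> cyl l x n \<Longrightarrow> cyl l z n = cyl l x n"
  by (rule cyl_cong) (auto simp: cyl_def)

lemma cyl_0 [simp]: "cyl l x 0 = fullshift l"
  by (auto simp: cyl_def)

lemma cyls_disjoint: "c \<in> cyls l n \<Longrightarrow> d \<in> cyls l n \<Longrightarrow> c \<noteq> d \<Longrightarrow> c \<inter> d = {}"
proof (rule ccontr)
  assume "c \<in> cyls l n" "d \<in> cyls l n" "c \<noteq> d" "c \<inter> d \<noteq> {}"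
  then obtain x y z where "c = cyl l x n" "d = cyl l y n" "z \<in> c" "z \<in> d" by (auto simp: cyls_def)
  then show False using cyl_eq_if_mem[of z l x n] cyl_eq_if_mem[of z l y n] \<open>c \<noteq> d\<close> by simp
qed

lemma cyl_subset_fullshift_cyls: "c \<in> cyls l n \<Longrightarrow> c \<subseteq> fullshift l"
  by (auto simp: cyls_def cyl_def)

lemma finite_cyls: "finite (cyls l n)"
proof -
  have "cyls l n \<subseteq> (\<lambda>w. cyl l w n) ` (Pi\<^sub>E {..<n} (\<lambda>_. {1..l}))"
  proof
    fix c assume "c \<in> cyls l n"
    then obtain x where x: "x \<in> fullshift l" "c = cyl l x n" by (auto simp: cyls_def)
    have "c = cyl l (restrict x {..<n}) n" using x by (auto intro!: cyl_cong)
    moreover have "restrict x {..<n} \<in> Pi\<^sub>E {..<n} (\<lambda>_. {1..l})"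
      using x(1) by (auto simp: fullshift_def)
    ultimately show "c \<in> (\<lambda>w. cyl l w n) ` (Pi\<^sub>E {..<n} (\<lambda>_. {1..l}))" by blast
  qed
  then show ?thesis by (rule finite_subset) (simp add: finite_PiE)
qed

lemma closed_fullshift: "closed (fullshift l)"
proof -
  have "fullshift l = (\<Inter>i. (\<lambda>x. x i) -` {1..l})" by (auto simp: fullshift_def)
  moreover have "closed ((\<lambda>x::nat\<Rightarrow>nat. x i) -` {1..l})" for i
    by (rule closed_vimage) (auto intro: continuous_on_product_coordinates)
  ultimately show ?thesis by auto
qed

lemma closed_cyl: "closed (cyl l x n)"
proof -
  have "cyl l x n = fullshift l \<inter> (\<Inter>i\<in>{..<n}. {z. z i = x i})" by (auto simp: cyl_def)
  moreover have "closed {z::nat\<Rightarrow>nat. z i = x i}" for i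
    by (rule closed_Collect_eq) (auto intro: continuous_on_product_coordinates)
  ultimately show ?thesis using closed_fullshift by (auto intro!: closed_Int closed_INT)
qed

lemma space_shift_borel [simp]: "space (shift_borel l) = fullshift l"
  by (simp add: shift_borel_def space_restrict_space)

lemma cyl_in_shift_borel: "cyl l x n \<in> sets (shift_borel l)"
  unfolding shift_borel_def sets_restrict_space
  using closed_cyl[of l x n] cyl_subset_fullshift[of l x n]
  by (auto intro!: image_eqI[where x="cyl l x n"])

lemma cyls_in_shift_borel: "c \<in> cyls l n \<Longrightarrow> c \<in> sets (shift_borel l)"
  by (auto simp: cyls_def cyl_in_shift_borel)

lemma cyl_subset_cyl_algebra: "A \<in> cyl_algebra l n \<Longrightarrow> x \<in> A \<Longrightarrow> cyl l x n \<subseteq> A"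
  unfolding cyl_algebra_def cyl_def by auto

lemma cyl_algebra_eq_Union_cyls: "A \<in> cyl_algebra l n \<Longrightarrow> A = \<Union>{c\<in>cyls l n. c \<subseteq> A}"
proof
  assume A: "A \<in> cyl_algebra l n"
  show "A \<subseteq> \<Union>{c\<in>cyls l n. c \<subseteq> A}"
  proof
    fix x assume x: "x \<in> A"
    then have "x \<in> fullshift l" using A by (auto simp: cyl_algebra_def)
    then show "x \<in> \<Union>{c\<in>cyls l n. c \<subseteq> A}"
      using cyl_subset_cyl_algebra[OF A x] cyl_self[of x l n] by (auto simp: cyls_def)
  qed
qed blast

lemma cyl_algebra_in_shift_borel: "A \<in> cyl_algebra l n \<Longrightarrow> A \<in> sets (shift_borel l)"
  apply (subst cyl_algebra_eq_Union_cyls, assumption)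
  apply (rule sets.finite_Union)
  using finite_cyls cyls_in_shift_borel by auto

lemma cyl_algebra_subset: "A \<in> cyl_algebra l n \<Longrightarrow> A \<subseteq> fullshift l"
  by (simp add: cyl_algebra_def)

lemma cyl_algebra_mono:
  assumes "A \<in> cyl_algebra l n" "n \<le> m"
  shows "A \<in> cyl_algebra l m"
proof -
  have "x \<in> A \<longleftrightarrow> z \<in> A" if "x \<in> fullshift l" "z \<in> fullshift l" "\<forall>i<m. x i = z i" for x z
  proof -
    have "\<forall>i<n. x i = z i" using that(3) assms(2) by simp
    then show ?thesis using assms(1) that(1,2) unfolding cyl_algebra_def by blast
  qed
  then show ?thesis using assms(1) unfolding cyl_algebra_def by blast
qed

lemma fullshift_in_cyl_algebra: "fullshift l \<in> cyl_algebra l n"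
  unfolding cyl_algebra_def by simp

lemma empty_in_cyl_algebra: "{} \<in> cyl_algebra l n"
  unfolding cyl_algebra_def by simp

lemma Diff_in_cyl_algebra:
  assumes "A \<in> cyl_algebra l n"
  shows "fullshift l - A \<in> cyl_algebra l n"
proof -
  have "x \<in> A \<longleftrightarrow> z \<in> A" if "x \<in> fullshift l" "z \<in> fullshift l" "\<forall>i<n. x i = z i" for x z
    using assms that unfolding cyl_algebra_def by blast
  then show ?thesis unfolding cyl_algebra_def by blast
qed

lemma UN_in_cyl_algebra:
  assumes "\<And>i. i \<in> I \<Longrightarrow> A i \<in> cyl_algebra l n"
  shows "(\<Union>i\<in>I. A i) \<in> cyl_algebra l n"
proof -
  have "x \<in> A i \<longleftrightarrow> z \<in> A i"
    if "i \<in> I" "x \<in> fullshift l" "z \<in> fullshift l" "\<forall>j<n. x j = z j" for i x z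
    using assms[OF that(1)] that(2-4) unfolding cyl_algebra_def by blast
  then show ?thesis using assms unfolding cyl_algebra_def by blast
qed

lemma open_contains_cylinder:
  fixes U :: "(nat \<Rightarrow> nat) set"
  assumes "open U" "x \<in> U"
  obtains n where "\<And>z. (\<forall>i<n. z i = x i) \<Longrightarrow> z \<in> U"
proof -
  from assms have "openin (product_topology (\<lambda>i. euclidean) UNIV) U" by (simp add: open_fun_def)
  from product_topology_open_contains_basis[OF this assms(2)]
  obtain X where X: "x \<in> (\<Pi>\<^sub>E i\<in>UNIV. X i)" "finite {i. X i \<noteq> topspace (euclidean::nat topology)}"
     "(\<Pi>\<^sub>E i\<in>UNIV. X i) \<subseteq> U" by auto
  from X(2) obtain n where n: "{i. X i \<noteq> UNIV} \<subseteq> {..<n}" using finite_nat_bounded by fastforce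
  have "z \<in> U" if z: "\<forall>i<n. z i = x i" for z
  proof -
    have "z i \<in> X i" for i
    proof (cases "i < n")
      case True then show ?thesis using z X(1) by (auto simp: PiE_iff)
    next
      case False then show ?thesis using n by auto
    qed
    then show ?thesis using X(3) by auto
  qed
  then show ?thesis by (rule that)
qed

lemma fullshift_Int_open_in_sigma_cyl_algebra:
  assumes U: "open U"
  shows "fullshift l \<inter> U \<in> sigma_sets (fullshift l) (\<Union>n. cyl_algebra l n)"
proof -
  define A where "A n = {x \<in> fullshift l. cyl l x n \<subseteq> U}" for n
  have "A n \<in> cyl_algebra l n" for n
    unfolding cyl_algebra_def
  proof (intro CollectI conjI ballI impI)
    fix x z assume xz: "x \<in> fullshift l" "z \<in> fullshift l" "\<forall>i<n. x i = z i"
    then have "cyl l x n = cyl l z n" by (intro cyl_cong) auto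
    then show "x \<in> A n \<longleftrightarrow> z \<in> A n" using xz by (simp add: A_def)
  qed (auto simp: A_def)
  then have "\<Union>(range A) \<in> sigma_sets (fullshift l) (\<Union>n. cyl_algebra l n)"
    by (intro sigma_sets.Union sigma_sets.Basic) blast
  moreover have "fullshift l \<inter> U \<subseteq> \<Union>(range A)"
  proof
    fix x assume x: "x \<in> fullshift l \<inter> U"
    obtain n where "\<And>z. (\<forall>i<n. z i = x i) \<Longrightarrow> z \<in> U"
      using open_contains_cylinder[OF U, of x] x by auto
    then have "x \<in> A n" using x unfolding A_def cyl_def by auto
    then show "x \<in> \<Union>(range A)" by blast
  qed
  moreover have "\<Union>(range A) \<subseteq> fullshift l \<inter> U"
    using cyl_self by (fastforce simp: A_def)
  ultimately show ?thesis by (metis subset_antisym)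
qed

lemma sets_shift_borel_eq_sigma:
  "sets (shift_borel l) = sigma_sets (fullshift l) (\<Union>n. cyl_algebra l n)"
proof
  show "sigma_sets (fullshift l) (\<Union>n. cyl_algebra l n) \<subseteq> sets (shift_borel l)"
    by (rule sets.sigma_sets_subset') (use cyl_algebra_in_shift_borel sets.top[of "shift_borel l"] in auto)
next
  have "fullshift l \<inter> X \<in> sigma_sets (fullshift l) (\<Union>n. cyl_algebra l n)"
    if "X \<in> sigma_sets UNIV {S. open S}" for X
    using that
  proof (induction rule: sigma_sets.induct)
    case (Basic U)
    then show ?case using fullshift_Int_open_in_sigma_cyl_algebra by simp
  next
    case Empty then show ?case by (simp add: sigma_sets.Empty)
  next
    case (Compl a)
    have "fullshift l \<inter> (UNIV - a) = fullshift l - (fullshift l \<inter> a)" by blast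
    then show ?case using Compl by (simp add: sigma_sets.Compl)
  next
    case (Union a)
    have "fullshift l \<inter> \<Union>(range a) = (\<Union>i. fullshift l \<inter> a i)" by blast
    then show ?case using Union sigma_sets.Union[of "\<lambda>i. fullshift l \<inter> a i"] by simp
  qed
  then show "sets (shift_borel l) \<subseteq> sigma_sets (fullshift l) (\<Union>n. cyl_algebra l n)"
    unfolding shift_borel_def sets_restrict_space sets_borel
    by (intro image_subsetI) (simp add: Int_commute)
qed

section \<open>Approximation by cylinder sets\<close>

lemma measure_cyl_algebra_vimage_sum:
  assumes "finite_measure N" and A: "A \<in> cyl_algebra l n"
    and G: "\<And>c. c \<in> cyls l n \<Longrightarrow> G \<inter> T -` c \<in> sets N"
  shows "measure N (G \<inter> T -` A) = (\<Sum>c\<in>{c\<in>cyls l n. c \<subseteq> A}. measure N (G \<inter> T -` c))"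
proof -
  let ?S = "{c\<in>cyls l n. c \<subseteq> A}"
  have "G \<inter> T -` A = (\<Union>c\<in>?S. G \<inter> T -` c)"
    using cyl_algebra_eq_Union_cyls[OF A] by blast
  moreover have "measure N (\<Union>c\<in>?S. G \<inter> T -` c) = (\<Sum>c\<in>?S. measure N (G \<inter> T -` c))"
  proof (rule finite_measure.finite_measure_finite_Union[OF assms(1)])
    show "finite ?S" using finite_cyls[of l n] by simp
    show "(\<lambda>c. G \<inter> T -` c) ` ?S \<subseteq> sets N" using G by blast
    show "disjoint_family_on (\<lambda>c. G \<inter> T -` c) ?S"
      unfolding disjoint_family_on_def using cyls_disjoint by blast
  qed
  ultimately show ?thesis by simp
qed

lemma measure_cyl_algebra_sum:
  assumes fm: "finite_measure N" and s: "sets N = sets (shift_borel l)" and A: "A \<in> cyl_algebra l n"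
  shows "measure N A = (\<Sum>c\<in>{c\<in>cyls l n. c \<subseteq> A}. measure N c)"
proof -
  have "measure N (fullshift l \<inter> id -` A) =
      (\<Sum>c\<in>{c\<in>cyls l n. c \<subseteq> A}. measure N (fullshift l \<inter> id -` c))"
    by (rule measure_cyl_algebra_vimage_sum[OF fm A])
       (use cyls_in_shift_borel s cyl_subset_fullshift_cyls in \<open>auto simp: Int_absorb1\<close>)
  moreover have "fullshift l \<inter> id -` A = A" using cyl_algebra_subset[OF A] by auto
  moreover have "fullshift l \<inter> id -` c = c" if "c \<in> cyls l n" for c
    using cyl_subset_fullshift_cyls[OF that] by auto
  ultimately show ?thesis by simp
qed

lemma measure_cyl_algebra_le:
  assumes "finite_measure M" "sets M = sets (shift_borel l)"
    and "finite_measure N" "sets N = sets (shift_borel l)"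
    and le: "\<And>c. c \<in> cyls l n \<Longrightarrow> measure M c \<le> K * measure N c"
    and A: "A \<in> cyl_algebra l n"
  shows "measure M A \<le> K * measure N A"
proof -
  have "measure M A = (\<Sum>c\<in>{c\<in>cyls l n. c \<subseteq> A}. measure M c)"
    using measure_cyl_algebra_sum[OF assms(1,2) A] .
  also have "\<dots> \<le> (\<Sum>c\<in>{c\<in>cyls l n. c \<subseteq> A}. K * measure N c)"
    using le by (intro sum_mono) auto
  also have "\<dots> = K * measure N A"
    using measure_cyl_algebra_sum[OF assms(3,4) A] by (simp add: sum_distrib_left)
  finally show ?thesis .
qed

lemma finite_measure_UN_tail:
  fixes B :: "nat \<Rightarrow> 'a set"
  assumes "finite_measure N" and B: "\<And>i. B i \<in> sets N" and "e > 0"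
  obtains m where "\<And>m'. m \<le> m' \<Longrightarrow> measure N ((\<Union>i. B i) - (\<Union>i<m'. B i)) < e"
proof -
  interpret finite_measure N by fact
  define F where "F m = (\<Union>i<m. B i)" for m
  have F: "F m \<in> sets N" for m unfolding F_def using B by (intro sets.finite_UN) auto
  have inc: "incseq F" unfolding F_def by (intro monoI) (auto, meson order_less_le_trans lessThan_iff)
  have UF: "(\<Union>m. F m) = (\<Union>i. B i)" unfolding F_def by auto
  have "(\<lambda>m. measure N (F m)) \<longlonglongrightarrow> measure N (\<Union>i. B i)"
    using finite_Lim_measure_incseq[of F] F inc UF by auto
  from LIMSEQ_D[OF this \<open>e > 0\<close>] obtain m
    where m: "\<And>m'. m \<le> m' \<Longrightarrow> norm (measure N (F m') - measure N (\<Union>i. B i)) < e" by blast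
  have "measure N ((\<Union>i. B i) - F m') < e" if "m \<le> m'" for m'
  proof -
    have "F m' \<subseteq> (\<Union>i. B i)" unfolding F_def by auto
    then have "measure N ((\<Union>i. B i) - F m') = measure N (\<Union>i. B i) - measure N (F m')"
      using finite_measure_Diff F B by auto
    then show ?thesis using m[OF that] by auto
  qed
  then show ?thesis unfolding F_def by (rule that)
qed

lemma measure_sym_diff_UN_le:
  fixes A a :: "nat \<Rightarrow> 'a set"
  assumes "finite_measure N" and A: "\<And>i. A i \<in> sets N" and a: "\<And>i. a i \<in> sets N"
  shows "measure N (sym_diff (\<Union>i<m. A i) (\<Union>i. a i)) \<le>
    (\<Sum>i<m. measure N (sym_diff (A i) (a i))) + measure N ((\<Union>i. a i) - (\<Union>i<m. a i))"
proof -
  interpret finite_measure N by fact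
  let ?D = "\<Union>i<m. sym_diff (A i) (a i)" and ?R = "(\<Union>i. a i) - (\<Union>i<m. a i)"
  have "measure N (sym_diff (\<Union>i<m. A i) (\<Union>i. a i)) \<le> measure N (?D \<union> ?R)"
    using A a by (intro finite_measure_mono) auto
  also have "\<dots> \<le> measure N ?D + measure N ?R"
    using A a by (intro measure_Un_le) auto
  also have "measure N ?D \<le> (\<Sum>i<m. measure N (sym_diff (A i) (a i)))"
    using A a by (intro measure_UNION_le) auto
  finally show ?thesis by simp
qed

definition cyl_approximable ::
  "nat \<Rightarrow> (nat \<Rightarrow> nat) measure \<Rightarrow> (nat \<Rightarrow> nat) measure \<Rightarrow> (nat \<Rightarrow> nat) set \<Rightarrow> bool" where
  "cyl_approximable l N1 N2 B \<longleftrightarrow> (\<forall>e>0. \<exists>n A. A \<in> cyl_algebra l n \<and>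
     measure N1 (sym_diff A B) < e \<and> measure N2 (sym_diff A B) < e)"

lemma cyl_approximable_UN:
  fixes a :: "nat \<Rightarrow> (nat \<Rightarrow> nat) set"
  assumes N: "finite_measure N1" "finite_measure N2"
    and s: "sets N1 = sets (shift_borel l)" "sets N2 = sets (shift_borel l)"
    and a: "\<And>i. a i \<in> sets (shift_borel l)" "\<And>i. cyl_approximable l N1 N2 (a i)"
  shows "cyl_approximable l N1 N2 (\<Union>i. a i)"
  unfolding cyl_approximable_def
proof (intro allI impI)
  fix e :: real assume e: "e > 0"
  obtain m1 where m1: "\<And>m'. m1 \<le> m' \<Longrightarrow> measure N1 ((\<Union>i. a i) - (\<Union>i<m'. a i)) < e/2"
    using finite_measure_UN_tail[OF N(1), of a "e/2"] a s e by auto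
  obtain m2 where m2: "\<And>m'. m2 \<le> m' \<Longrightarrow> measure N2 ((\<Union>i. a i) - (\<Union>i<m'. a i)) < e/2"
    using finite_measure_UN_tail[OF N(2), of a "e/2"] a s e by auto
  define m where "m = max m1 m2"
  define d where "d = e / (2 * (real m + 1))"
  have d: "d > 0" using e by (simp add: d_def)
  have "\<forall>i. \<exists>n A. A \<in> cyl_algebra l n \<and>
      measure N1 (sym_diff A (a i)) < d \<and> measure N2 (sym_diff A (a i)) < d"
    using a(2) d unfolding cyl_approximable_def by blast
  then obtain nn AA where AA: "\<And>i. AA i \<in> cyl_algebra l (nn i)"
    "\<And>i. measure N1 (sym_diff (AA i) (a i)) < d" "\<And>i. measure N2 (sym_diff (AA i) (a i)) < d"
    by metis
  define n where "n = (\<Sum>i<m. nn i)"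
  define A where "A = (\<Union>i<m. AA i)"
  have "A \<in> cyl_algebra l n"
    unfolding A_def n_def using AA(1)
    by (intro UN_in_cyl_algebra cyl_algebra_mono[OF AA(1)] member_le_sum) auto
  moreover have "measure N (sym_diff A (\<Union>i. a i)) < e"
    if N: "finite_measure N" "sets N = sets (shift_borel l)"
      and Nd: "\<And>i. measure N (sym_diff (AA i) (a i)) < d"
      and Nt: "measure N ((\<Union>i. a i) - (\<Union>i<m. a i)) < e/2" for N
  proof -
    have "measure N (sym_diff A (\<Union>i. a i)) \<le>
        (\<Sum>i<m. measure N (sym_diff (AA i) (a i))) + measure N ((\<Union>i. a i) - (\<Union>i<m. a i))"
      unfolding A_def using N AA(1) cyl_algebra_in_shift_borel a(1)
      by (intro measure_sym_diff_UN_le) auto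
    moreover have "(\<Sum>i<m. measure N (sym_diff (AA i) (a i))) \<le> (\<Sum>i<m. d)"
      using Nd by (intro sum_mono) (simp add: less_imp_le)
    moreover have "(\<Sum>i<m. d) \<le> e / 2" using e by (simp add: d_def field_simps)
    ultimately show ?thesis using Nt by linarith
  qed
  then have "measure N1 (sym_diff A (\<Union>i. a i)) < e" "measure N2 (sym_diff A (\<Union>i. a i)) < e"
    using N s AA m1 m2 by (simp_all add: m_def)
  ultimately show "\<exists>n A. A \<in> cyl_algebra l n \<and> measure N1 (sym_diff A (\<Union>i. a i)) < e \<and>
      measure N2 (sym_diff A (\<Union>i. a i)) < e"
    by blast
qed

lemma cyl_approximable_shift_borel:
  assumes N: "finite_measure N1" "finite_measure N2"
    and s: "sets N1 = sets (shift_borel l)" "sets N2 = sets (shift_borel l)"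
    and B: "B \<in> sets (shift_borel l)"
  shows "cyl_approximable l N1 N2 B"
proof -
  have "B \<in> sigma_sets (fullshift l) (\<Union>n. cyl_algebra l n)" using B sets_shift_borel_eq_sigma by auto
  then show ?thesis
  proof (induction rule: sigma_sets.induct)
    case (Basic a)
    then obtain n where "a \<in> cyl_algebra l n" by blast
    then show ?case unfolding cyl_approximable_def by (intro allI impI exI[of _ n] exI[of _ a]) simp
  next
    case Empty
    show ?case unfolding cyl_approximable_def
      by (intro allI impI exI[of _ 0] exI[of _ "{}"]) (simp add: empty_in_cyl_algebra)
  next
    case (Compl a)
    have "a \<subseteq> fullshift l"
      using Compl(1) sets_shift_borel_eq_sigma sets.sets_into_space space_shift_borel by metis
    then have "sym_diff (fullshift l - A) (fullshift l - a) = sym_diff A a"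
      if "A \<in> cyl_algebra l n" for A n
      using cyl_algebra_subset[OF that] by blast
    with Compl(2) show ?case
      unfolding cyl_approximable_def by (metis Diff_in_cyl_algebra)
  next
    case (Union a)
    then show ?case using cyl_approximable_UN[OF N s] sets_shift_borel_eq_sigma by auto
  qed
qed

lemma abs_measure_diff_le_sym_diff:
  assumes "finite_measure N" and A: "A \<in> sets N" and B: "B \<in> sets N"
  shows "\<bar>measure N A - measure N B\<bar> \<le> measure N (sym_diff A B)"
proof -
  interpret finite_measure N by fact
  have le: "measure N X \<le> measure N Y + measure N (X - Y)"
    if "X \<in> sets N" "Y \<in> sets N" for X Y
  proof -
    have "measure N X \<le> measure N (Y \<union> (X - Y))" using that by (intro finite_measure_mono) auto
    also have "\<dots> \<le> measure N Y + measure N (X - Y)" using that by (intro measure_Un_le) auto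
    finally show ?thesis .
  qed
  have "measure N (sym_diff A B) = measure N (A - B) + measure N (B - A)"
    using A B by (intro finite_measure_Union) auto
  then show ?thesis unfolding abs_le_iff
    using le[OF A B] le[OF B A] measure_nonneg[of N "A - B"] measure_nonneg[of N "B - A"] by linarith
qed

lemma measure_le_const_mult_extend:
  assumes M: "finite_measure M" "sets M = sets (shift_borel l)"
    and N: "finite_measure N" "sets N = sets (shift_borel l)"
    and K: "0 \<le> K" and le: "\<And>n A. A \<in> cyl_algebra l n \<Longrightarrow> measure M A \<le> K * measure N A"
    and B: "B \<in> sets (shift_borel l)"
  shows "measure M B \<le> K * measure N B"
proof (rule field_le_epsilon)
  fix e :: real assume e: "e > 0"
  define d where "d = e / (K + 1)"
  have d: "d > 0" using e K by (simp add: d_def)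
  obtain n A where A: "A \<in> cyl_algebra l n"
    "measure M (sym_diff A B) < d" "measure N (sym_diff A B) < d"
    using cyl_approximable_shift_borel[OF M(1) N(1) M(2) N(2) B] d
    unfolding cyl_approximable_def by blast
  have "A \<in> sets (shift_borel l)" using cyl_algebra_in_shift_borel[OF A(1)] .
  then have "\<bar>measure M A - measure M B\<bar> \<le> measure M (sym_diff A B)"
    "\<bar>measure N A - measure N B\<bar> \<le> measure N (sym_diff A B)"
    using abs_measure_diff_le_sym_diff[OF M(1)] abs_measure_diff_le_sym_diff[OF N(1)] M(2) N(2) B
    by auto
  then have "measure M B \<le> K * measure N A + d" "K * measure N A \<le> K * (measure N B + d)"
    using le[OF A(1)] A(2,3) K by (auto intro!: mult_left_mono)
  then have "measure M B \<le> K * measure N B + (K + 1) * d" by (simp add: algebra_simps)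
  then show "measure M B \<le> K * measure N B + e" using K by (simp add: d_def)
qed

lemma funpow_shift: "(shift ^^ n) x = (\<lambda>i. x (i + n))"
  by (induction n arbitrary: x) (auto simp: shift_def)

lemma shift_in_fullshift: "x \<in> fullshift l \<Longrightarrow> shift x \<in> fullshift l"
  by (auto simp: shift_def fullshift_def)

lemma funpow_shift_in_fullshift: "x \<in> fullshift l \<Longrightarrow> (shift ^^ n) x \<in> fullshift l"
  by (auto simp: funpow_shift fullshift_def)

lemma measurable_shift: "shift \<in> measurable (shift_borel l) (shift_borel l)"
proof -
  have "continuous_on (fullshift l) shift"
    unfolding shift_def
    by (intro continuous_on_coordinatewise_then_product
          continuous_on_subset[OF continuous_on_product_coordinates]) auto
  then have "shift \<in> borel_measurable (restrict_space borel (fullshift l))"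
    by (rule borel_measurable_continuous_on_restrict)
  then show ?thesis unfolding shift_borel_def
    by (intro measurable_restrict_space2) (auto simp: space_restrict_space shift_in_fullshift)
qed

lemma measurable_funpow_shift: "shift ^^ n \<in> measurable (shift_borel l) (shift_borel l)"
  by (induction n) (auto intro: measurable_comp[OF _ measurable_shift, simplified comp_def])

lemma vimage_funpow_shift_in_shift_borel:
  "X \<in> sets (shift_borel l) \<Longrightarrow> (shift ^^ n) -` X \<inter> fullshift l \<in> sets (shift_borel l)"
  using measurable_sets[OF measurable_funpow_shift[of n l]] by simp

lemma birkhoff_add: "birkhoff g (n + p) z = birkhoff g n z + birkhoff g p ((shift ^^ n) z)"
proof (induction p)
  case 0 then show ?case by (simp add: birkhoff_def)
next
  case (Suc p)
  have "(shift ^^ (n + p)) z = (shift ^^ p) ((shift ^^ n) z)"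
    by (simp add: funpow_shift add.commute add.left_commute)
  then show ?case using Suc by (simp add: birkhoff_def)
qed

lemma cyl_concat:
  fixes n p :: nat
  assumes x: "x \<in> fullshift l" and w: "w \<in> fullshift l"
  defines "z \<equiv> (\<lambda>i. if i < n then x i else w (i - n))"
  shows "z \<in> fullshift l" "cyl l z n = cyl l x n" "(shift ^^ n) z = w"
    "cyl l x n \<inter> (shift ^^ n) -` cyl l w p = cyl l z (n + p)"
proof -
  show "z \<in> fullshift l" using x w by (auto simp: z_def fullshift_def)
  show "cyl l z n = cyl l x n" by (rule cyl_cong) (simp add: z_def)
  show "(shift ^^ n) z = w" by (simp add: funpow_shift z_def)
  show "cyl l x n \<inter> (shift ^^ n) -` cyl l w p = cyl l z (n + p)"
  proof (intro set_eqI iffI)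
    fix y assume "y \<in> cyl l x n \<inter> (shift ^^ n) -` cyl l w p"
    then have y: "y \<in> fullshift l" "\<forall>i<n. y i = x i" "\<forall>i<p. y (i + n) = w i"
      by (auto simp: cyl_def funpow_shift)
    have "y i = z i" if "i < n + p" for i
    proof (cases "i < n")
      case True then show ?thesis using y by (simp add: z_def)
    next
      case False
      then have "i - n < p" "i = (i - n) + n" using that by auto
      then show ?thesis using y(3) False by (metis z_def)
    qed
    then show "y \<in> cyl l z (n + p)" using y by (simp add: cyl_def)
  next
    fix y assume "y \<in> cyl l z (n + p)"
    then have y: "y \<in> fullshift l" "\<forall>i<n+p. y i = z i" by (auto simp: cyl_def)
    have "y (i + n) = w i" if "i < p" for i
      using y(2) that by (metis add.commute add_diff_cancel_left' add_less_cancel_left not_add_less2 z_def)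
    then show "y \<in> cyl l x n \<inter> (shift ^^ n) -` cyl l w p"
      using y funpow_shift_in_fullshift[OF y(1), of n] by (auto simp: cyl_def funpow_shift z_def)
  qed
qed

section \<open>Gibbs measures\<close>

definition gibbs_bounds ::
  "nat \<Rightarrow> ((nat \<Rightarrow> nat) \<Rightarrow> real) \<Rightarrow> (nat \<Rightarrow> nat) measure \<Rightarrow> real \<Rightarrow> real \<Rightarrow> bool" where
  "gibbs_bounds l g M P C \<longleftrightarrow> C > 0 \<and> (\<forall>z\<in>fullshift l. \<forall>n.
     measure M (cyl l z n) \<le> C * exp (- real n * P + birkhoff g n z) \<and>
     exp (- real n * P + birkhoff g n z) \<le> C * measure M (cyl l z n))"

lemma inv_gibbs_iff:
  "inv_gibbs l g M \<longleftrightarrow> prob_space M \<and> sets M = sets (shift_borel l) \<and> shift_invariant M \<and>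
     (\<exists>P C. gibbs_bounds l g M P C)"
proof -
  have "(\<exists>C0>0. \<forall>z\<in>fullshift l. \<forall>n.
      1 / C0 < measure M (cyl l z n) / exp (- real n * P + birkhoff g n z) \<and>
      measure M (cyl l z n) / exp (- real n * P + birkhoff g n z) < C0) \<longleftrightarrow>
    (\<exists>C. gibbs_bounds l g M P C)" (is "?ratio \<longleftrightarrow> _") for P
  proof
    assume ?ratio
    then obtain C0 where "C0 > 0" "\<And>z n. z \<in> fullshift l \<Longrightarrow>
        1 / C0 < measure M (cyl l z n) / exp (- real n * P + birkhoff g n z) \<and>
        measure M (cyl l z n) / exp (- real n * P + birkhoff g n z) < C0"
      by blast
    then have "gibbs_bounds l g M P C0"
      unfolding gibbs_bounds_def
      by (auto simp: field_simps less_imp_le)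
    then show "\<exists>C. gibbs_bounds l g M P C" by blast
  next
    assume "\<exists>C. gibbs_bounds l g M P C"
    then obtain C where C: "C > 0" and b: "\<And>z n. z \<in> fullshift l \<Longrightarrow>
        measure M (cyl l z n) \<le> C * exp (- real n * P + birkhoff g n z) \<and>
        exp (- real n * P + birkhoff g n z) \<le> C * measure M (cyl l z n)"
      unfolding gibbs_bounds_def by blast
    have "1 / (C + 1) < m / e \<and> m / e < C + 1"
      if "m \<le> C * e" "e \<le> C * m" "e > 0" for m e
    proof -
      have "m > 0" using that C by (metis mult_le_0_iff not_le order_trans less_le)
      then show ?thesis using that C by (auto simp: field_simps)
    qed
    then show ?ratio using b C by (intro exI[of _ "C + 1"]) auto
  qed
  then show ?thesis unfolding inv_gibbs_def by blast
qed

lemma inv_gibbsD: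
  assumes "inv_gibbs l g M"
  shows "prob_space M" "sets M = sets (shift_borel l)" "space M = fullshift l"
    "shift \<in> measurable M M" "distr M M shift = M" "\<exists>P C. gibbs_bounds l g M P C"
proof -
  show "prob_space M" "sets M = sets (shift_borel l)" "shift \<in> measurable M M"
    "distr M M shift = M" "\<exists>P C. gibbs_bounds l g M P C"
    using assms by (auto simp: inv_gibbs_iff shift_invariant_def)
  then show "space M = fullshift l" using sets_eq_imp_space_eq space_shift_borel by metis
qed

lemma inv_gibbs_finite_measure: "inv_gibbs l g M \<Longrightarrow> finite_measure M"
  using inv_gibbsD(1) prob_space_def by blast

lemma inv_gibbs_measure_fullshift: "inv_gibbs l g M \<Longrightarrow> measure M (fullshift l) = 1"
  using inv_gibbsD(1,3) prob_space.prob_space by metis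

lemma inv_gibbs_funpow_shift:
  assumes "inv_gibbs l g M"
  shows "shift ^^ n \<in> measurable M M" "distr M M (shift ^^ n) = M"
proof -
  have s: "sets M = sets (shift_borel l)" using inv_gibbsD[OF assms] by auto
  show m: "shift ^^ n \<in> measurable M M" for n
    using measurable_funpow_shift[of n l] measurable_cong_sets[OF s s] by simp
  show "distr M M (shift ^^ n) = M"
  proof (induction n)
    case 0 then show ?case by (simp add: distr_id2 id_def)
  next
    case (Suc n)
    have "distr M M (shift ^^ Suc n) = distr (distr M M (shift ^^ n)) M shift"
      using distr_distr[OF inv_gibbsD(4)[OF assms] m] by simp
    then show ?case using Suc inv_gibbsD(5)[OF assms] by (simp add: comp_def)
  qed
qed

lemma inv_gibbs_measure_vimage:
  assumes "inv_gibbs l g M" "A \<in> sets M"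
  shows "measure M ((shift ^^ n) -` A \<inter> fullshift l) = measure M A"
  using measure_distr[OF inv_gibbs_funpow_shift(1)[OF assms(1)] assms(2)]
    inv_gibbs_funpow_shift(2)[OF assms(1)] inv_gibbsD(3)[OF assms(1)] by simp

lemma gibbs_bounds_pos: "gibbs_bounds l g M P C \<Longrightarrow> C > 0"
  by (simp add: gibbs_bounds_def)

lemma gibbs_bounds_cyls_le:
  assumes M: "gibbs_bounds l g M P C" and N: "gibbs_bounds l g N P' C'" and c: "c \<in> cyls l n"
  shows "measure M c \<le> C * C' * exp (real n * (P' - P)) * measure N c"
proof -
  obtain z where z: "z \<in> fullshift l" "c = cyl l z n" using c unfolding cyls_def by blast
  have "exp (- real n * P + birkhoff g n z) = exp (real n * (P' - P)) * exp (- real n * P' + birkhoff g n z)"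
    by (simp add: mult_exp_exp algebra_simps)
  moreover have "measure M c \<le> C * exp (- real n * P + birkhoff g n z)"
    "exp (- real n * P' + birkhoff g n z) \<le> C' * measure N c"
    using M N z unfolding gibbs_bounds_def by auto
  ultimately show ?thesis
    using gibbs_bounds_pos[OF M]
    by (smt (verit, best) exp_gt_zero mult.assoc mult.left_commute mult_left_mono)
qed

lemma gibbs_pressure_le:
  assumes M: "inv_gibbs l g M" "gibbs_bounds l g M P C"
    and N: "inv_gibbs l g N" "gibbs_bounds l g N P' C'"
  shows "P \<le> P'"
proof (rule ccontr)
  assume "\<not> P \<le> P'"
  define K where "K = C * C'"
  have K: "K > 0" using gibbs_bounds_pos M N by (simp add: K_def)
  have bound: "0 \<le> ln K + real n * (P' - P)" for n
  proof -
    have "measure M (fullshift l) \<le> K * exp (real n * (P' - P)) * measure N (fullshift l)"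
    proof (rule measure_cyl_algebra_le[OF inv_gibbs_finite_measure[OF M(1)] inv_gibbsD(2)[OF M(1)]
          inv_gibbs_finite_measure[OF N(1)] inv_gibbsD(2)[OF N(1)] _ fullshift_in_cyl_algebra])
      fix c assume "c \<in> cyls l n"
      then show "measure M c \<le> K * exp (real n * (P' - P)) * measure N c"
        using gibbs_bounds_cyls_le[OF M(2) N(2)] by (simp add: K_def)
    qed
    then have "ln 1 \<le> ln (K * exp (real n * (P' - P)))"
      using inv_gibbs_measure_fullshift[OF M(1)] inv_gibbs_measure_fullshift[OF N(1)] K
      by (subst ln_le_cancel_iff) auto
    then show ?thesis using K by (simp add: ln_mult)
  qed
  obtain n :: nat where "ln K / (P - P') < real n" using reals_Archimedean2 by blast
  then have "ln K < real n * (P - P')" using \<open>\<not> P \<le> P'\<close> by (simp add: divide_less_eq)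
  with bound[of n] show False by (simp add: algebra_simps)
qed

lemma gibbs_measure_le_const_mult:
  assumes M: "inv_gibbs l g M" and N: "inv_gibbs l g N"
  obtains K where "K > 0" "\<And>B. B \<in> sets (shift_borel l) \<Longrightarrow> measure M B \<le> K * measure N B"
proof -
  obtain P C where bM: "gibbs_bounds l g M P C" using inv_gibbsD(6)[OF M] by blast
  obtain P' C' where bN: "gibbs_bounds l g N P' C'" using inv_gibbsD(6)[OF N] by blast
  have "P = P'" using gibbs_pressure_le[OF M bM N bN] gibbs_pressure_le[OF N bN M bM] by simp
  note fin = inv_gibbs_finite_measure[OF M] inv_gibbsD(2)[OF M] inv_gibbs_finite_measure[OF N] inv_gibbsD(2)[OF N]
  have K: "C * C' > 0" using gibbs_bounds_pos[OF bM] gibbs_bounds_pos[OF bN] by simp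
  have "measure M A \<le> C * C' * measure N A" if "A \<in> cyl_algebra l n" for A n
  proof (rule measure_cyl_algebra_le[OF fin _ that])
    fix c assume "c \<in> cyls l n"
    then show "measure M c \<le> C * C' * measure N c"
      using gibbs_bounds_cyls_le[OF bM bN] \<open>P = P'\<close> by simp
  qed
  then have "measure M B \<le> C * C' * measure N B" if "B \<in> sets (shift_borel l)" for B
    using measure_le_const_mult_extend[OF fin _ _ that] K by simp
  with K show ?thesis by (rule that)
qed

lemma gibbs_bounds_cyl_concat:
  assumes b: "gibbs_bounds l g M P C" and z: "z \<in> fullshift l"
  shows "measure M (cyl l z n) * measure M (cyl l ((shift ^^ n) z) p) \<le> C^3 * measure M (cyl l z (n + p))"
proof -
  have C: "C > 0" using gibbs_bounds_pos[OF b] .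
  define a where "a = exp (- real n * P + birkhoff g n z)"
  define a' where "a' = exp (- real p * P + birkhoff g p ((shift ^^ n) z))"
  have "exp (- real (n + p) * P + birkhoff g (n + p) z) = a * a'"
    unfolding a_def a'_def birkhoff_add by (simp add: mult_exp_exp algebra_simps)
  then have 3: "a * a' \<le> C * measure M (cyl l z (n + p))"
    using b z unfolding gibbs_bounds_def by metis
  have 1: "measure M (cyl l z n) \<le> C * a"
    using b z unfolding gibbs_bounds_def a_def by auto
  have 2: "measure M (cyl l ((shift ^^ n) z) p) \<le> C * a'"
    using b funpow_shift_in_fullshift[OF z] unfolding gibbs_bounds_def a'_def by auto
  have "measure M (cyl l z n) * measure M (cyl l ((shift ^^ n) z) p) \<le> (C * a) * (C * a')"
    using 1 2 by (intro mult_mono) (auto simp: a_def C less_imp_le)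
  also have "\<dots> = C^2 * (a * a')" by (simp add: power2_eq_square algebra_simps)
  also have "\<dots> \<le> C^2 * (C * measure M (cyl l z (n + p)))" using 3 by (intro mult_left_mono) auto
  also have "\<dots> = C^3 * measure M (cyl l z (n + p))" by (simp add: power3_eq_cube power2_eq_square)
  finally show ?thesis .
qed

lemma gibbs_cyl_algebra_quasi_independent:
  assumes M: "inv_gibbs l g M" and b: "gibbs_bounds l g M P C"
    and A: "A \<in> cyl_algebra l n" and B: "B \<in> cyl_algebra l p"
  shows "measure M A * measure M B \<le> C^3 * measure M (A \<inter> (shift ^^ n) -` B)"
proof -
  have fm: "finite_measure M" using inv_gibbs_finite_measure[OF M] .
  have sM: "sets M = sets (shift_borel l)" using inv_gibbsD(2)[OF M] .
  let ?SA = "{c\<in>cyls l n. c \<subseteq> A}" and ?SB = "{c\<in>cyls l p. c \<subseteq> B}"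
  have mes: "X \<inter> (shift ^^ n) -` Y \<in> sets M"
    if "X \<in> sets (shift_borel l)" "X \<subseteq> fullshift l" "Y \<in> sets (shift_borel l)" for X Y
  proof -
    have "X \<inter> (shift ^^ n) -` Y = X \<inter> ((shift ^^ n) -` Y \<inter> fullshift l)" using that(2) by blast
    then show ?thesis using that vimage_funpow_shift_in_shift_borel[OF that(3), of n] sM by auto
  qed
  have cyls_le: "measure M a * measure M c \<le> C^3 * measure M (a \<inter> (shift ^^ n) -` c)"
    if ac: "a \<in> cyls l n" "c \<in> cyls l p" for a c
  proof -
    obtain x w where x: "x \<in> fullshift l" "a = cyl l x n" and w: "w \<in> fullshift l" "c = cyl l w p"
      using ac unfolding cyls_def by blast
    note concat = cyl_concat[OF x(1) w(1), where n=n]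
    show ?thesis using gibbs_bounds_cyl_concat[OF b concat(1), of n p] concat x w by simp
  qed
  have sum_A: "measure M (A \<inter> (shift ^^ n) -` B) = (\<Sum>a\<in>?SA. measure M (a \<inter> (shift ^^ n) -` B))"
    using measure_cyl_algebra_vimage_sum[OF fm A, of "(shift ^^ n) -` B" id]
      mes cyls_in_shift_borel cyl_subset_fullshift_cyls cyl_algebra_in_shift_borel[OF B]
    by (simp add: Int_commute)
  have sum_B: "measure M (a \<inter> (shift ^^ n) -` B) = (\<Sum>c\<in>?SB. measure M (a \<inter> (shift ^^ n) -` c))"
    if "a \<in> cyls l n" for a
    using measure_cyl_algebra_vimage_sum[OF fm B, of a "shift ^^ n"]
      mes cyls_in_shift_borel cyl_subset_fullshift_cyls that by simp
  have "measure M A * measure M B = (\<Sum>a\<in>?SA. \<Sum>c\<in>?SB. measure M a * measure M c)"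
    using measure_cyl_algebra_sum[OF fm sM A] measure_cyl_algebra_sum[OF fm sM B]
    by (simp add: sum_product)
  also have "\<dots> \<le> (\<Sum>a\<in>?SA. \<Sum>c\<in>?SB. C^3 * measure M (a \<inter> (shift ^^ n) -` c))"
    using cyls_le by (intro sum_mono) auto
  also have "\<dots> = C^3 * measure M (A \<inter> (shift ^^ n) -` B)"
    using sum_A sum_B by (simp add: sum_distrib_left)
  finally show ?thesis .
qed

lemma invariant_cyl_algebra_leak_le:
  assumes M: "inv_gibbs l g M" and S: "S \<in> sets (shift_borel l)"
    and inv: "measure M (S - (shift ^^ n) -` S) = 0" and A: "A \<in> cyl_algebra l n"
  shows "measure M (A \<inter> (shift ^^ n) -` (fullshift l - A)) \<le> measure M (sym_diff A S)"
proof -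
  interpret finite_measure M using inv_gibbs_finite_measure[OF M] .
  have sM: "sets M = sets (shift_borel l)" using inv_gibbsD(2)[OF M] .
  have As: "A \<in> sets M" "A \<subseteq> fullshift l"
    using cyl_algebra_in_shift_borel[OF A] cyl_algebra_subset[OF A] sM by auto
  have SM: "S \<in> sets M" "S \<subseteq> fullshift l"
    using S sM sets.sets_into_space[OF S] by auto
  define X2 where "X2 = S - ((shift ^^ n) -` S \<inter> fullshift l)"
  define X3 where "X3 = (shift ^^ n) -` (S - A) \<inter> fullshift l"
  have X2: "X2 \<in> sets M" "measure M X2 = 0"
  proof -
    show "X2 \<in> sets M"
      using SM vimage_funpow_shift_in_shift_borel[OF S, of n] sM unfolding X2_def by auto
    have "X2 = S - (shift ^^ n) -` S" unfolding X2_def using SM(2) by blast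
    then show "measure M X2 = 0" using inv by simp
  qed
  have X3: "X3 \<in> sets M" "measure M X3 = measure M (S - A)"
    using vimage_funpow_shift_in_shift_borel[of "S - A" l n] inv_gibbs_measure_vimage[OF M, of "S - A" n]
      As SM sM unfolding X3_def by auto
  have "A \<inter> (shift ^^ n) -` (fullshift l - A) \<subseteq> (A - S) \<union> X2 \<union> X3"
    unfolding X2_def X3_def using As by auto
  then have "measure M (A \<inter> (shift ^^ n) -` (fullshift l - A)) \<le> measure M ((A - S) \<union> X2 \<union> X3)"
    using As SM X2 X3 by (intro finite_measure_mono) auto
  also have "\<dots> \<le> measure M (A - S) + measure M X2 + measure M X3"
    using As SM X2 X3 measure_Un_le[of "(A - S) \<union> X2" M X3] measure_Un_le[of "A - S" M X2] by auto
  also have "\<dots> = measure M (sym_diff A S)"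
  proof -
    have "measure M (sym_diff A S) = measure M (A - S) + measure M (S - A)"
      using As SM by (intro finite_measure_Union) auto
    then show ?thesis using X2 X3 by simp
  qed
  finally show ?thesis .
qed

lemma gibbs_cyl_algebra_variance_le:
  assumes M: "inv_gibbs l g M" and b: "gibbs_bounds l g M P C" and S: "S \<in> sets (shift_borel l)"
    and inv: "measure M (S - (shift ^^ n) -` S) = 0" and A: "A \<in> cyl_algebra l n"
  shows "measure M A * (1 - measure M A) \<le> C^3 * measure M (sym_diff A S)"
proof -
  interpret prob_space M using inv_gibbsD(1)[OF M] .
  have "A \<in> sets M" using cyl_algebra_in_shift_borel[OF A] inv_gibbsD(2)[OF M] by simp
  then have "measure M (fullshift l - A) = 1 - measure M A"
    using prob_compl inv_gibbsD(3)[OF M] by simp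
  then have "measure M A * (1 - measure M A) \<le> C^3 * measure M (A \<inter> (shift ^^ n) -` (fullshift l - A))"
    using gibbs_cyl_algebra_quasi_independent[OF M b A Diff_in_cyl_algebra[OF A]] by simp
  also have "\<dots> \<le> C^3 * measure M (sym_diff A S)"
    using invariant_cyl_algebra_leak_le[OF M S inv A] gibbs_bounds_pos[OF b]
    by (intro mult_left_mono) auto
  finally show ?thesis .
qed

lemma mult_one_minus_le_add_abs_diff:
  fixes a s :: real
  assumes "0 \<le> a" "a \<le> 1" "0 \<le> s" "s \<le> 1"
  shows "s * (1 - s) \<le> a * (1 - a) + \<bar>s - a\<bar>"
proof -
  have "s * (1 - s) - a * (1 - a) = (s - a) * (1 - s - a)" by (simp add: algebra_simps)
  moreover have "\<bar>(s - a) * (1 - s - a)\<bar> \<le> \<bar>s - a\<bar>"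
    using assms by (auto simp: abs_mult intro!: mult_left_le)
  ultimately show ?thesis by linarith
qed

text \<open>For a cylinder set A approximating the invariant set S, quasi-independence bounds
  \<mu>(A) (1 - \<mu>(A)) by the mass that A sends into its complement under a shift, and the
  invariance of S makes that mass small.\<close>
lemma gibbs_ergodic:
  assumes M: "inv_gibbs l g M" and S: "S \<in> sets (shift_borel l)"
    and inv: "\<And>n. measure M (S - (shift ^^ n) -` S) = 0"
  shows "measure M S = 0 \<or> measure M S = 1"
proof -
  interpret prob_space M using inv_gibbsD(1)[OF M] .
  have sM: "sets M = sets (shift_borel l)" using inv_gibbsD(2)[OF M] .
  obtain P C where b: "gibbs_bounds l g M P C" using inv_gibbsD(6)[OF M] by blast
  define s where "s = measure M S"
  have s01: "0 \<le> s" "s \<le> 1" using S sM by (auto simp: s_def)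
  have approx: "s * (1 - s) \<le> (C^3 + 1) * e" if e: "e > 0" for e
  proof -
    obtain n A where A: "A \<in> cyl_algebra l n" "measure M (sym_diff A S) < e"
      using cyl_approximable_shift_borel[OF finite_measure_axioms finite_measure_axioms sM sM S] e
      unfolding cyl_approximable_def by blast
    have As: "A \<in> sets M" using cyl_algebra_in_shift_borel[OF A(1)] sM by simp
    have "\<bar>s - measure M A\<bar> < e"
      using abs_measure_diff_le_sym_diff[OF finite_measure_axioms As, of S] S sM A(2)
      by (simp add: s_def abs_minus_commute)
    moreover have "measure M A * (1 - measure M A) \<le> C^3 * e"
      using gibbs_cyl_algebra_variance_le[OF M b S inv A(1)] A(2) gibbs_bounds_pos[OF b]
      by (smt (verit) mult_left_mono zero_less_power)
    ultimately show ?thesis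
      using mult_one_minus_le_add_abs_diff[of "measure M A" s] s01 by (simp add: algebra_simps)
  qed
  have C3: "C^3 + 1 > 0" using gibbs_bounds_pos[OF b] by (simp add: add_pos_pos)
  have "s * (1 - s) \<le> 0"
  proof (rule field_le_epsilon)
    fix e :: real assume "e > 0"
    then have "s * (1 - s) \<le> (C^3 + 1) * (e / (C^3 + 1))" using C3 by (intro approx) simp
    then show "s * (1 - s) \<le> 0 + e" using C3 by simp
  qed
  then have "s = 0 \<or> s = 1" using s01 by (auto simp: mult_le_0_iff)
  then show ?thesis by (simp add: s_def)
qed

section \<open>Uniqueness\<close>

lemma absolutely_continuous_if_le_const_mult:
  assumes "sets M = sets N" and le: "\<And>B. B \<in> sets N \<Longrightarrow> measure M B \<le> K * measure N B"
    and "finite_measure M"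
  shows "absolutely_continuous N M"
  unfolding absolutely_continuous_def
proof
  interpret finite_measure M by fact
  fix B assume "B \<in> null_sets N"
  then have "B \<in> sets N" "measure N B = 0" by (auto simp: measure_def)
  then have "B \<in> sets M" "measure M B \<le> 0" using le[of B] assms(1) by auto
  then show "B \<in> null_sets M" using measure_nonneg[of M B] by (auto simp: emeasure_eq_measure)
qed

lemma density_AE_le_if_le_const_mult:
  assumes M: "finite_measure M" and N: "finite_measure N" and K: "0 \<le> K"
    and le: "\<And>B. B \<in> sets N \<Longrightarrow> measure M B \<le> K * measure N B"
    and D[measurable]: "D \<in> borel_measurable N" and MD: "density N D = M"
  shows "AE x in N. D x \<le> ennreal (K + 1)"
proof -
  interpret M: finite_measure M by fact
  interpret N: finite_measure N by fact
  define B where "B = {x \<in> space N. ennreal (K + 1) < D x}"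
  have Bs: "B \<in> sets N" unfolding B_def by measurable
  have "ennreal ((K + 1) * measure N B) = (\<integral>\<^sup>+ x. ennreal (K + 1) * indicator B x \<partial>N)"
    using nn_integral_cmult_indicator[OF Bs] K by (simp add: N.emeasure_eq_measure ennreal_mult)
  also have "\<dots> \<le> (\<integral>\<^sup>+ x. D x * indicator B x \<partial>N)"
    by (intro nn_integral_mono) (auto simp: B_def indicator_def less_imp_le)
  also have "\<dots> = ennreal (measure M B)"
    using emeasure_density[OF D Bs] MD by (simp add: mult.commute M.emeasure_eq_measure)
  also have "\<dots> \<le> ennreal (K * measure N B)" using le[OF Bs] by (simp add: ennreal_leI)
  finally have "(K + 1) * measure N B \<le> K * measure N B"
    using K by (subst (asm) ennreal_le_iff) auto
  then have "emeasure N B = 0"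
    using measure_nonneg[of N B] by (simp add: N.emeasure_eq_measure algebra_simps)
  then show ?thesis
    using Bs by (intro AE_I'[of B]) (auto simp: B_def not_le)
qed

lemma le_const_mult_imp_bounded_density:
  assumes M: "finite_measure M" and N: "finite_measure N" and sMN: "sets M = sets N"
    and K: "0 \<le> K" and le: "\<And>B. B \<in> sets N \<Longrightarrow> measure M B \<le> K * measure N B"
  obtains h where "h \<in> borel_measurable N" "\<And>x. 0 \<le> h x" "\<And>x. h x \<le> K + 1"
    "M = density N (\<lambda>x. ennreal (h x))"
proof -
  interpret M: finite_measure M by fact
  interpret N: finite_measure N by fact
  have ac: "absolutely_continuous N M" by (rule absolutely_continuous_if_le_const_mult[OF sMN le M])
  define D where "D = RN_deriv N M"
  have MD: "density N D = M" unfolding D_def using N.density_RN_deriv[OF ac sMN] .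
  have D[measurable]: "D \<in> borel_measurable N" unfolding D_def by simp
  define h where "h x = min (enn2real (D x)) (K + 1)" for x
  have "AE x in N. D x \<noteq> \<infinity>"
    unfolding D_def using N.RN_deriv_finite[OF _ ac sMN] M.sigma_finite_measure_axioms by simp
  moreover have "AE x in N. D x \<le> ennreal (K + 1)"
    using density_AE_le_if_le_const_mult[OF M N K le D MD] .
  ultimately have "AE x in N. D x = ennreal (h x)"
  proof eventually_elim
    case (elim x)
    have "enn2real (D x) \<le> enn2real (ennreal (K + 1))" by (rule enn2real_mono[OF elim(2)]) simp
    moreover have "enn2real (ennreal (K + 1)) = K + 1" using K by (intro enn2real_ennreal) simp
    ultimately have "enn2real (D x) \<le> K + 1" by linarith
    then show ?case using elim by (simp add: h_def top.not_eq_extremum)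
  qed
  then have "M = density N (\<lambda>x. ennreal (h x))"
    using MD by (auto intro!: density_cong simp: h_def)
  moreover have "h \<in> borel_measurable N" unfolding h_def by measurable
  ultimately show ?thesis using K by (intro that) (auto simp: h_def)
qed

text \<open>If the density h of an invariant measure with respect to an invariant probability N is
  itself invariant as a measure, then h \<circ> T and h have the same L2 norm and inner product
  \<integral> h (h \<circ> T) = \<integral> h^2, so \<integral> (h \<circ> T - h)^2 = 0.\<close>
lemma invariant_density_AE_invariant:
  fixes N :: "'a measure"
  assumes N: "prob_space N" and T: "T \<in> measurable N N" and TN: "distr N N T = N"
    and h[measurable]: "h \<in> borel_measurable N" and hb: "\<And>x. 0 \<le> h x" "\<And>x. h x \<le> B"
    and MT: "distr (density N (\<lambda>x. ennreal (h x))) (density N (\<lambda>x. ennreal (h x))) T =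
      density N (\<lambda>x. ennreal (h x))"
  shows "AE x in N. h (T x) = h x"
proof -
  interpret N: prob_space N by fact
  define M where "M = density N (\<lambda>x. ennreal (h x))"
  have TM: "T \<in> measurable M M" using T by (simp add: M_def)
  have hT[measurable]: "(\<lambda>x. h (T x)) \<in> borel_measurable N" using measurable_comp[OF T h] by (simp add: comp_def)
  have bounded: "integrable N f" if "f \<in> borel_measurable N" "\<And>x. \<bar>f x\<bar> \<le> B'" for f :: "'a \<Rightarrow> real" and B'
    using N.integrable_const_bound[of f B'] that by auto
  have B0: "0 \<le> B" using hb(1)[of undefined] hb(2)[of undefined] by linarith
  have i1: "integrable N (\<lambda>x. h (T x) ^ 2)"
    by (rule bounded[of _ "B^2"]) (use hb in \<open>auto intro!: power_mono simp: abs_le_iff\<close>)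
  have i2: "integrable N (\<lambda>x. h x * h (T x))"
    by (rule bounded[of _ "B*B"]) (use hb B0 in \<open>auto intro!: mult_mono simp: abs_mult\<close>)
  have i3: "integrable N (\<lambda>x. h x ^ 2)"
    by (rule bounded[of _ "B^2"]) (use hb in \<open>auto intro!: power_mono simp: abs_le_iff\<close>)
  have E1: "(\<integral>x. h (T x) ^ 2 \<partial>N) = (\<integral>x. h x ^ 2 \<partial>N)"
    using integral_distr[OF T, of "\<lambda>x. h x ^ 2"] TN by simp
  have E2: "(\<integral>x. h x * h (T x) \<partial>N) = (\<integral>x. h x ^ 2 \<partial>N)"
  proof -
    have "(\<integral>x. h (T x) \<partial>M) = (\<integral>x. h x * h (T x) \<partial>N)"
      unfolding M_def by (subst integral_density) (use hb in auto)
    moreover have "(\<integral>x. h x \<partial>M) = (\<integral>x. h x * h x \<partial>N)"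
      unfolding M_def by (subst integral_density) (use hb in auto)
    moreover have "(\<integral>x. h x \<partial>distr M M T) = (\<integral>x. h (T x) \<partial>M)"
      by (rule integral_distr[OF TM]) (simp add: M_def)
    ultimately show ?thesis using MT by (simp add: M_def power2_eq_square)
  qed
  have sq: "(\<lambda>x. (h (T x) - h x) ^ 2) = (\<lambda>x. h (T x) ^ 2 - 2 * (h x * h (T x)) + h x ^ 2)"
    by (auto simp: power2_eq_square algebra_simps)
  have "integrable N (\<lambda>x. (h (T x) - h x) ^ 2)" unfolding sq using i1 i2 i3 by simp
  moreover have "(\<integral>x. (h (T x) - h x) ^ 2 \<partial>N) = 0" unfolding sq using i1 i2 i3 E1 E2 by simp
  ultimately have "AE x in N. (h (T x) - h x) ^ 2 = 0"
    using integral_nonneg_eq_0_iff_AE[of N "\<lambda>x. (h (T x) - h x) ^ 2"] by simp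
  then show ?thesis by auto
qed

lemma (in prob_space) integral_gt_if_AE_gt:
  fixes f :: "'a \<Rightarrow> real"
  assumes f: "integrable M f" and gt: "AE x in M. c < f x"
  shows "c < integral\<^sup>L M f"
proof -
  have fc: "integrable M (\<lambda>x. f x - c)" using f by simp
  have "AE x in M. 0 \<le> f x - c" using gt by eventually_elim simp
  moreover have "\<not> (AE x in M. f x - c = 0)"
  proof
    assume "AE x in M. f x - c = 0"
    with gt have "AE x in M. False" by eventually_elim simp
    then show False by (simp add: AE_False)
  qed
  ultimately have "integral\<^sup>L M (\<lambda>x. f x - c) \<noteq> 0" using integral_nonneg_eq_0_iff_AE[OF fc] by auto
  moreover have "0 \<le> integral\<^sup>L M (\<lambda>x. f x - c)"
    using gt by (intro integral_nonneg_AE) (auto elim: eventually_mono)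
  ultimately show ?thesis using f prob_space by simp
qed

lemma gibbs_invariant_function_AE_or_AE_not:
  fixes h :: "(nat \<Rightarrow> nat) \<Rightarrow> real"
  assumes N: "inv_gibbs l g N" and h[measurable]: "h \<in> borel_measurable N"
    and U[measurable]: "U \<in> sets borel" and inv: "\<And>n. AE x in N. h ((shift ^^ n) x) = h x"
  shows "(AE x in N. h x \<in> U) \<or> (AE x in N. h x \<notin> U)"
proof -
  interpret prob_space N using inv_gibbsD(1)[OF N] .
  have sN: "sets N = sets (shift_borel l)" and spN: "space N = fullshift l"
    using inv_gibbsD(2,3)[OF N] by auto
  define S where "S = {x \<in> space N. h x \<in> U}"
  have S: "S \<in> sets N" unfolding S_def by measurable
  have "measure N (S - (shift ^^ n) -` S) = 0" for n
  proof -
    have Tn[measurable]: "shift ^^ n \<in> measurable N N" using inv_gibbs_funpow_shift(1)[OF N] .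
    define Z where "Z = {x \<in> space N. h ((shift ^^ n) x) \<noteq> h x}"
    have "(\<lambda>x. h ((shift ^^ n) x)) \<in> borel_measurable N"
      using measurable_comp[OF Tn h] by (simp add: comp_def)
    then have Z: "Z \<in> sets N" unfolding Z_def using borel_measurable_neq[OF _ h] by simp
    have "measure N Z = 0"
      using inv[of n] prob_Collect_eq_0[of "\<lambda>x. h ((shift ^^ n) x) \<noteq> h x"] Z by (simp add: Z_def)
    moreover have "S - (shift ^^ n) -` S \<subseteq> Z"
      unfolding S_def Z_def spN using funpow_shift_in_fullshift[of _ l n] by auto
    ultimately show ?thesis using finite_measure_mono[of _ Z] Z measure_nonneg
      by (metis order_antisym)
  qed
  then have "prob S = 0 \<or> prob S = 1" using gibbs_ergodic[OF N] S sN by auto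
  then show ?thesis using prob_Collect_eq_0 prob_Collect_eq_1 S by (auto simp: S_def)
qed

lemma gibbs_invariant_density_AE_eq_1:
  fixes h :: "(nat \<Rightarrow> nat) \<Rightarrow> real"
  assumes N: "inv_gibbs l g N" and h[measurable]: "h \<in> borel_measurable N"
    and hb: "\<And>x. 0 \<le> h x" "\<And>x. h x \<le> B" and int: "(\<integral>x. h x \<partial>N) = 1"
    and inv: "\<And>n. AE x in N. h ((shift ^^ n) x) = h x"
  shows "AE x in N. h x = 1"
proof -
  interpret prob_space N using inv_gibbsD(1)[OF N] .
  have ih: "integrable N h" using integrable_const_bound[of h B] hb by auto
  have "\<not> (AE x in N. 1 < h x)" using integral_gt_if_AE_gt[OF ih] int by auto
  then have le: "AE x in N. h x \<le> 1"
    using gibbs_invariant_function_AE_or_AE_not[OF N h _ inv, of "{1<..}"] by (auto simp: not_less)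
  have "\<not> (AE x in N. h x < 1)"
  proof
    assume "AE x in N. h x < 1"
    then have "AE x in N. -1 < - h x" by eventually_elim simp
    then show False using integral_gt_if_AE_gt[of "\<lambda>x. - h x" "-1"] ih int by simp
  qed
  then have ge: "AE x in N. 1 \<le> h x"
    using gibbs_invariant_function_AE_or_AE_not[OF N h _ inv, of "{..<1}"] by (auto simp: not_less)
  from le ge show ?thesis by eventually_elim simp
qed

lemma gibbs_unique:
  assumes M: "inv_gibbs l g M" and N: "inv_gibbs l g N"
  shows "M = N"
proof -
  interpret M: prob_space M using inv_gibbsD(1)[OF M] .
  interpret N: prob_space N using inv_gibbsD(1)[OF N] .
  have sMN: "sets M = sets N" using inv_gibbsD(2) M N by simp
  obtain K where K: "K > 0" "\<And>B. B \<in> sets (shift_borel l) \<Longrightarrow> measure M B \<le> K * measure N B"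
    using gibbs_measure_le_const_mult[OF M N] by blast
  then obtain h where h: "h \<in> borel_measurable N" "\<And>x. 0 \<le> h x" "\<And>x. h x \<le> K + 1"
    and Mh: "M = density N (\<lambda>x. ennreal (h x))"
    using le_const_mult_imp_bounded_density[OF M.finite_measure_axioms N.finite_measure_axioms sMN]
      inv_gibbsD(2)[OF N] by (metis less_imp_le)
  have inv: "AE x in N. h ((shift ^^ n) x) = h x" for n
    using inv_gibbs_funpow_shift[OF M, of n] inv_gibbs_funpow_shift[OF N, of n] Mh
    by (intro invariant_density_AE_invariant[OF N.prob_space_axioms _ _ h]) auto
  have int: "(\<integral>x. h x \<partial>N) = 1"
  proof -
    have "(\<integral>x. (1::real) \<partial>M) = (\<integral>x. h x *\<^sub>R 1 \<partial>N)"
      unfolding Mh by (subst integral_density) (use h in auto)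
    then show ?thesis using M.prob_space by simp
  qed
  have "AE x in N. h x = 1" by (rule gibbs_invariant_density_AE_eq_1[OF N h int inv])
  then have "density N (\<lambda>x. ennreal (h x)) = density N (\<lambda>_. 1)"
    using h by (intro density_cong) auto
  then show ?thesis using Mh density_1 by simp
qed

section \<open>The image of a Gibbs measure under a one-block factor map\<close>

definition fiber_card :: "nat \<Rightarrow> (nat \<Rightarrow> nat) \<Rightarrow> nat \<Rightarrow> nat" where
  "fiber_card k \<phi> j = card {a\<in>{1..k}. \<phi> a = j}"

definition lift_symbol :: "nat \<Rightarrow> (nat \<Rightarrow> nat) \<Rightarrow> nat \<Rightarrow> nat" where
  "lift_symbol k \<phi> j = (SOME a. a \<in> {1..k} \<and> \<phi> a = j)"

definition lift :: "nat \<Rightarrow> (nat \<Rightarrow> nat) \<Rightarrow> (nat \<Rightarrow> nat) \<Rightarrow> (nat \<Rightarrow> nat)" where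
  "lift k \<phi> y = (\<lambda>i. lift_symbol k \<phi> (y i))"

definition factor_potential ::
  "nat \<Rightarrow> ((nat \<Rightarrow> nat) \<Rightarrow> real) \<Rightarrow> (nat \<Rightarrow> nat) \<Rightarrow> (nat \<Rightarrow> nat) \<Rightarrow> real" where
  "factor_potential k f \<phi> y = f (lift k \<phi> y) + ln (real (fiber_card k \<phi> (y 0)))"

context
  fixes k l :: nat and \<pi> :: "(nat \<Rightarrow> nat) \<Rightarrow> (nat \<Rightarrow> nat)" and \<phi> :: "nat \<Rightarrow> nat"
  assumes fac: "one_block_factor k l \<pi>"
    and phi: "\<And>x i. x \<in> fullshift k \<Longrightarrow> \<pi> x i = \<phi> (x i)"
begin

lemma factor_in_fullshift: "x \<in> fullshift k \<Longrightarrow> \<pi> x \<in> fullshift l"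
  using fac by (auto simp: one_block_factor_def)

lemma lift_symbol:
  assumes "j \<in> {1..l}"
  shows "lift_symbol k \<phi> j \<in> {1..k}" "\<phi> (lift_symbol k \<phi> j) = j"
proof -
  have "(\<lambda>_. j) \<in> fullshift l" using assms by (simp add: fullshift_def)
  then obtain x where x: "x \<in> fullshift k" "\<pi> x = (\<lambda>_. j)"
    using fac unfolding one_block_factor_def by (metis imageE)
  then have "x 0 \<in> {1..k} \<and> \<phi> (x 0) = j" using phi[OF x(1), of 0] by (simp add: fullshift_def)
  then have "lift_symbol k \<phi> j \<in> {1..k} \<and> \<phi> (lift_symbol k \<phi> j) = j"
    unfolding lift_symbol_def by (rule someI)
  then show "lift_symbol k \<phi> j \<in> {1..k}" "\<phi> (lift_symbol k \<phi> j) = j" by auto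
qed

lemma fiber_card_ge_1: "j \<in> {1..l} \<Longrightarrow> 1 \<le> fiber_card k \<phi> j"
  using lift_symbol[of j] by (auto simp: fiber_card_def Suc_le_eq card_gt_0_iff)

lemma lift_in_fullshift: "y \<in> fullshift l \<Longrightarrow> lift k \<phi> y \<in> fullshift k"
  using lift_symbol(1) by (auto simp: lift_def fullshift_def)

lemma factor_image_cyl_subset_iff:
  assumes x: "x \<in> fullshift k"
  shows "\<pi> ` cyl k x n \<subseteq> cyl l y n \<longleftrightarrow> (\<forall>i<n. \<phi> (x i) = y i)"
proof
  assume "\<pi> ` cyl k x n \<subseteq> cyl l y n"
  then have "\<pi> x \<in> cyl l y n" using cyl_self[OF x] by blast
  then show "\<forall>i<n. \<phi> (x i) = y i" using phi[OF x] by (simp add: cyl_def)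
next
  assume "\<forall>i<n. \<phi> (x i) = y i"
  then show "\<pi> ` cyl k x n \<subseteq> cyl l y n"
    using factor_in_fullshift phi by (auto simp: cyl_def)
qed

lemma factor_image_cyl_lift: "y \<in> fullshift l \<Longrightarrow> \<pi> ` cyl k (lift k \<phi> y) n \<subseteq> cyl l y n"
  using factor_image_cyl_subset_iff[OF lift_in_fullshift] lift_symbol(2)
  by (auto simp: lift_def fullshift_def)

lemma card_preimage_cyls:
  assumes y: "y \<in> fullshift l"
  shows "card (preimage_cyls k l \<pi> n y) = (\<Prod>i<n. fiber_card k \<phi> (y i))"
proof -
  have k: "1 \<le> k" using lift_symbol(1)[of "y 0"] y by (auto simp: fullshift_def)
  define W where "W = Pi\<^sub>E {..<n} (\<lambda>i. {a\<in>{1..k}. \<phi> a = y i})"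
  define ext where "ext w = (\<lambda>i. if i < n then w i else 1)" for w :: "nat \<Rightarrow> nat"
  have ext: "ext w \<in> fullshift k" "\<forall>i<n. \<phi> (ext w i) = y i" if "w \<in> W" for w
    using that k by (auto simp: W_def ext_def fullshift_def PiE_iff)
  have "preimage_cyls k l \<pi> n y = (\<lambda>w. cyl k (ext w) n) ` W"
  proof (intro set_eqI iffI)
    fix c assume "c \<in> preimage_cyls k l \<pi> n y"
    then obtain x where x: "x \<in> fullshift k" "c = cyl k x n" "\<pi> ` c \<subseteq> cyl l y n"
      unfolding preimage_cyls_def by blast
    have "restrict x {..<n} \<in> W"
      using x factor_image_cyl_subset_iff[OF x(1)] by (auto simp: W_def fullshift_def)
    moreover have "c = cyl k (ext (restrict x {..<n})) n"
      using x(2) by (auto intro!: cyl_cong simp: ext_def)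
    ultimately show "c \<in> (\<lambda>w. cyl k (ext w) n) ` W" by blast
  next
    fix c assume "c \<in> (\<lambda>w. cyl k (ext w) n) ` W"
    then obtain w where "w \<in> W" "c = cyl k (ext w) n" by blast
    then show "c \<in> preimage_cyls k l \<pi> n y"
      using ext factor_image_cyl_subset_iff unfolding preimage_cyls_def by blast
  qed
  moreover have "inj_on (\<lambda>w. cyl k (ext w) n) W"
  proof (rule inj_onI)
    fix w w' assume ww: "w \<in> W" "w' \<in> W" "cyl k (ext w) n = cyl k (ext w') n"
    then have "ext w \<in> cyl k (ext w') n" using cyl_self[OF ext(1)[OF ww(1)], of n] by simp
    then have "\<forall>i<n. w i = w' i" by (auto simp: cyl_def ext_def)
    then show "w = w'" using ww(1,2) unfolding W_def by (intro PiE_ext) auto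
  qed
  ultimately show ?thesis by (simp add: card_image W_def card_PiE fiber_card_def)
qed

lemma birkhoff_factor_potential:
  "birkhoff (factor_potential k f \<phi>) n y =
    birkhoff f n (lift k \<phi> y) + (\<Sum>i<n. ln (real (fiber_card k \<phi> (y i))))"
  unfolding birkhoff_def factor_potential_def by (simp add: sum.distrib funpow_shift lift_def)

lemma exp_birkhoff_factor_potential:
  assumes y: "y \<in> fullshift l"
  shows "exp (birkhoff (factor_potential k f \<phi>) n y) =
    real (card (preimage_cyls k l \<pi> n y)) * exp (birkhoff f n (lift k \<phi> y))"
proof -
  have "real (fiber_card k \<phi> (y i)) > 0" for i
    using fiber_card_ge_1[of "y i"] y by (simp add: fullshift_def)
  then have "exp (\<Sum>i<n. ln (real (fiber_card k \<phi> (y i)))) = (\<Prod>i<n. real (fiber_card k \<phi> (y i)))"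
    by (simp add: exp_sum)
  then show ?thesis
    unfolding birkhoff_factor_potential exp_add card_preimage_cyls[OF y] by simp
qed

lemma factor_potential_Bow:
  assumes "f \<in> Bow k"
  shows "factor_potential k f \<phi> \<in> Bow l"
proof -
  obtain B where B: "\<And>n z z'. z \<in> fullshift k \<Longrightarrow> z' \<in> fullshift k \<Longrightarrow> (\<forall>i<n. z i = z' i) \<Longrightarrow>
      birkhoff f n z - birkhoff f n z' \<le> B"
    using assms unfolding Bow_def by blast
  have coord: "continuous_on (fullshift l) (\<lambda>y. h (y i))" for h :: "nat \<Rightarrow> 'a::topological_space" and i
    by (rule continuous_on_compose2[of UNIV h "fullshift l" "\<lambda>y. y i"])
       (auto intro: continuous_on_subset[OF continuous_on_product_coordinates])
  have "continuous_on (fullshift l) (lift k \<phi>)"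
    unfolding lift_def by (rule continuous_on_coordinatewise_then_product) (rule coord)
  then have "continuous_on (fullshift l) (\<lambda>y. f (lift k \<phi> y))"
    using assms lift_in_fullshift unfolding Bow_def
    by (intro continuous_on_compose2[of "fullshift k" f "fullshift l" "lift k \<phi>"]) auto
  moreover have "continuous_on (fullshift l) (\<lambda>y. ln (real (fiber_card k \<phi> (y 0))))"
    by (rule coord)
  ultimately have "continuous_on (fullshift l) (factor_potential k f \<phi>)"
    unfolding factor_potential_def by (rule continuous_on_add)
  moreover have "birkhoff (factor_potential k f \<phi>) n z - birkhoff (factor_potential k f \<phi>) n z' \<le> B"
    if z: "z \<in> fullshift l" "z' \<in> fullshift l" "\<forall>i<n. z i = z' i" for n z z'
  proof -
    have "(\<Sum>i<n. ln (real (fiber_card k \<phi> (z i)))) = (\<Sum>i<n. ln (real (fiber_card k \<phi> (z' i))))"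
      using z(3) by (intro sum.cong) auto
    moreover have "birkhoff f n (lift k \<phi> z) - birkhoff f n (lift k \<phi> z') \<le> B"
      using B[OF lift_in_fullshift[OF z(1)] lift_in_fullshift[OF z(2)]] z(3) by (simp add: lift_def)
    ultimately show ?thesis unfolding birkhoff_factor_potential by simp
  qed
  ultimately show ?thesis unfolding Bow_def by blast
qed

lemma measurable_factor: "\<pi> \<in> measurable (shift_borel k) (shift_borel l)"
proof -
  have "\<pi> \<in> borel_measurable (restrict_space borel (fullshift k))"
    using fac by (intro borel_measurable_continuous_on_restrict) (simp add: one_block_factor_def)
  then show ?thesis unfolding shift_borel_def
    by (intro measurable_restrict_space2) (auto simp: space_restrict_space factor_in_fullshift)
qed

lemma E_sets_subset_fullshift:
  assumes "E \<in> E_sets k l \<pi> n y"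
  shows "E \<subseteq> fullshift k"
proof
  fix x assume "x \<in> E"
  then obtain c where "c \<in> preimage_cyls k l \<pi> n y" "x \<in> c" using assms unfolding E_sets_def by blast
  then show "x \<in> fullshift k" unfolding preimage_cyls_def using cyl_subset_fullshift by blast
qed

lemma preimage_cyls_eq_cyl:
  assumes "c \<in> preimage_cyls k l \<pi> n y" "x \<in> c"
  shows "c = cyl k x n"
proof -
  obtain x' where "c = cyl k x' n" using assms(1) unfolding preimage_cyls_def by blast
  then show ?thesis using cyl_eq_if_mem[of x k x' n] assms(2) by simp
qed

lemma preimage_cyls_subset_cyls: "preimage_cyls k l \<pi> n y \<subseteq> cyls k n"
  unfolding preimage_cyls_def cyls_def by blast

lemma E_sets_bij_betw_preimage_cyls:
  assumes E: "E \<in> E_sets k l \<pi> n y"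
  shows "bij_betw (\<lambda>x. cyl k x n) E (preimage_cyls k l \<pi> n y)"
proof -
  let ?pc = "preimage_cyls k l \<pi> n y"
  have E1: "E \<subseteq> \<Union>?pc" and E2: "\<And>c. c \<in> ?pc \<Longrightarrow> \<exists>!x. x \<in> E \<and> x \<in> c"
    using E unfolding E_sets_def by auto
  have mem: "cyl k x n \<in> ?pc" if "x \<in> E" for x
    using E1 that preimage_cyls_eq_cyl by blast
  moreover have "inj_on (\<lambda>x. cyl k x n) E"
  proof (rule inj_onI)
    fix x x' assume xx: "x \<in> E" "x' \<in> E" "cyl k x n = cyl k x' n"
    then have "x \<in> cyl k x n" "x' \<in> cyl k x n"
      using cyl_self[of x k n] cyl_self[of x' k n] E_sets_subset_fullshift[OF E] by auto
    then show "x = x'" using E2[OF mem[OF xx(1)]] xx by blast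
  qed
  moreover have "c \<in> (\<lambda>x. cyl k x n) ` E" if "c \<in> ?pc" for c
    using E2[OF that] preimage_cyls_eq_cyl[OF that] by blast
  ultimately show ?thesis unfolding bij_betw_def by blast
qed

lemma E_sets_nonempty: "E_sets k l \<pi> n y \<noteq> {}"
proof -
  let ?pc = "preimage_cyls k l \<pi> n y"
  define E where "E = (\<lambda>c. SOME x. x \<in> c) ` ?pc"
  have some_in: "(SOME x. x \<in> c) \<in> c" if c: "c \<in> ?pc" for c
  proof -
    obtain x where "x \<in> fullshift k" "c = cyl k x n" using c unfolding preimage_cyls_def by blast
    then have "x \<in> c" using cyl_self by simp
    then show ?thesis using someI[of "\<lambda>x. x \<in> c"] by blast
  qed
  have "E \<in> E_sets k l \<pi> n y"
    unfolding E_sets_def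
  proof (intro CollectI conjI ballI)
    show "E \<subseteq> \<Union>?pc" unfolding E_def using some_in by blast
    fix c assume c: "c \<in> ?pc"
    show "\<exists>!x. x \<in> E \<and> x \<in> c"
    proof (rule ex1I[of _ "SOME x. x \<in> c"])
      show "(SOME x. x \<in> c) \<in> E \<and> (SOME x. x \<in> c) \<in> c" using some_in[OF c] c unfolding E_def by blast
      fix x assume x: "x \<in> E \<and> x \<in> c"
      then obtain c' where c': "c' \<in> ?pc" "x = (SOME x. x \<in> c')" unfolding E_def by blast
      have "c' \<inter> c \<noteq> {}" using some_in[OF c'(1)] c'(2) x by blast
      then have "c' = c" using cyls_disjoint c c'(1) preimage_cyls_subset_cyls by blast
      then show "x = (SOME x. x \<in> c)" using c'(2) by simp
    qed
  qed
  then show ?thesis by blast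
qed

context
  fixes \<mu> :: "(nat \<Rightarrow> nat) measure" and f :: "(nat \<Rightarrow> nat) \<Rightarrow> real"
  assumes gibbs: "inv_gibbs k f \<mu>"
begin

lemma measurable_factor_gibbs: "\<pi> \<in> measurable \<mu> (shift_borel l)"
  using measurable_factor measurable_cong_sets[OF inv_gibbsD(2)[OF gibbs] refl, of "shift_borel l"]
  by simp

lemma image_prob_space: "prob_space (distr \<mu> (shift_borel l) \<pi>)"
  using prob_space.prob_space_distr[OF inv_gibbsD(1)[OF gibbs] measurable_factor_gibbs] .

lemma image_shift_invariant: "shift_invariant (distr \<mu> (shift_borel l) \<pi>)"
proof -
  let ?\<nu> = "distr \<mu> (shift_borel l) \<pi>"
  have sm: "shift \<in> measurable ?\<nu> ?\<nu>"
    using measurable_shift measurable_cong_sets[of ?\<nu> "shift_borel l" ?\<nu> "shift_borel l"] by simp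
  have "distr ?\<nu> ?\<nu> shift = distr ?\<nu> (shift_borel l) shift" by (rule distr_cong) auto
  also have "\<dots> = distr \<mu> (shift_borel l) (shift \<circ> \<pi>)"
    by (rule distr_distr[OF measurable_shift measurable_factor_gibbs])
  also have "\<dots> = distr \<mu> (shift_borel l) (\<pi> \<circ> shift)"
    using fac inv_gibbsD(3)[OF gibbs] by (intro distr_cong) (auto simp: one_block_factor_def)
  also have "\<dots> = distr (distr \<mu> \<mu> shift) (shift_borel l) \<pi>"
    by (rule distr_distr[OF measurable_factor_gibbs inv_gibbsD(4)[OF gibbs], symmetric])
  also have "\<dots> = ?\<nu>" using inv_gibbsD(5)[OF gibbs] by simp
  finally show ?thesis unfolding shift_invariant_def using sm by simp
qed

lemma measure_image_cyl_eq_sum: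
  assumes y: "y \<in> fullshift l" and E: "E \<in> E_sets k l \<pi> n y"
  shows "measure (distr \<mu> (shift_borel l) \<pi>) (cyl l y n) = (\<Sum>x\<in>E. measure \<mu> (cyl k x n))"
proof -
  let ?pc = "preimage_cyls k l \<pi> n y"
  have pc: "?pc \<subseteq> cyls k n" by (rule preimage_cyls_subset_cyls)
  have "\<pi> -` cyl l y n \<inter> space \<mu> = \<Union>?pc"
  proof (intro set_eqI iffI)
    fix x assume x: "x \<in> \<pi> -` cyl l y n \<inter> space \<mu>"
    then have xf: "x \<in> fullshift k" using inv_gibbsD(3)[OF gibbs] by simp
    then have "cyl k x n \<in> ?pc"
      using x phi[OF xf] factor_image_cyl_subset_iff[OF xf] unfolding preimage_cyls_def by (auto simp: cyl_def)
    then show "x \<in> \<Union>?pc" using cyl_self[OF xf] by auto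
  next
    fix x assume "x \<in> \<Union>?pc"
    then show "x \<in> \<pi> -` cyl l y n \<inter> space \<mu>"
      using inv_gibbsD(3)[OF gibbs] cyl_subset_fullshift unfolding preimage_cyls_def by blast
  qed
  then have "measure (distr \<mu> (shift_borel l) \<pi>) (cyl l y n) = measure \<mu> (\<Union>?pc)"
    using measure_distr[OF measurable_factor_gibbs cyl_in_shift_borel] by simp
  also have "\<dots> = (\<Sum>c\<in>?pc. measure \<mu> c)"
  proof (rule finite_measure.finite_measure_finite_Union[OF inv_gibbs_finite_measure[OF gibbs], where A=id, simplified])
    show "finite ?pc" using finite_subset[OF pc finite_cyls] .
    show "?pc \<subseteq> sets \<mu>" using pc cyls_in_shift_borel inv_gibbsD(2)[OF gibbs] by auto
    show "disjoint_family_on id ?pc"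
      unfolding disjoint_family_on_def using pc cyls_disjoint by (metis id_apply subsetD)
  qed
  also have "\<dots> = (\<Sum>x\<in>E. measure \<mu> (cyl k x n))"
    using sum.reindex_bij_betw[OF E_sets_bij_betw_preimage_cyls[OF E], of "measure \<mu>"] by simp
  finally show ?thesis .
qed

lemma gbar_bounds:
  assumes b: "gibbs_bounds k f \<mu> P C" and y: "y \<in> fullshift l"
  shows "measure (distr \<mu> (shift_borel l) \<pi>) (cyl l y n) \<le> C * exp (- real n * P) * gbar k l \<pi> f n y"
    "exp (- real n * P) * gbar k l \<pi> f n y \<le> C * measure (distr \<mu> (shift_borel l) \<pi>) (cyl l y n)"
proof -
  let ?\<nu> = "distr \<mu> (shift_borel l) \<pi>" and ?F = "\<lambda>E. \<Sum>x\<in>E. exp (birkhoff f n x)"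
  have ep: "exp (- real n * P) > 0" by simp
  have term_bounds: "measure \<mu> (cyl k x n) \<le> C * (exp (- real n * P) * exp (birkhoff f n x))"
    "exp (- real n * P) * exp (birkhoff f n x) \<le> C * measure \<mu> (cyl k x n)"
    if "x \<in> fullshift k" for x
    using b that unfolding gibbs_bounds_def by (auto simp: exp_add[symmetric])
  have up: "measure ?\<nu> (cyl l y n) \<le> C * exp (- real n * P) * ?F E"
    and low: "exp (- real n * P) * ?F E \<le> C * measure ?\<nu> (cyl l y n)"
    if E: "E \<in> E_sets k l \<pi> n y" for E
    using term_bounds E_sets_subset_fullshift[OF E] measure_image_cyl_eq_sum[OF y E]
    by (auto simp: sum_distrib_left mult.assoc intro!: sum_mono)
  have Fb: "?F E \<le> C * measure ?\<nu> (cyl l y n) / exp (- real n * P)" if "E \<in> E_sets k l \<pi> n y" for E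
    using low[OF that] ep by (simp add: le_divide_eq mult.commute)
  have "gbar k l \<pi> f n y \<le> C * measure ?\<nu> (cyl l y n) / exp (- real n * P)"
    unfolding gbar_def by (rule cSUP_least[OF E_sets_nonempty Fb])
  then show "exp (- real n * P) * gbar k l \<pi> f n y \<le> C * measure ?\<nu> (cyl l y n)"
    using ep by (simp add: le_divide_eq mult.commute)
  obtain E where E: "E \<in> E_sets k l \<pi> n y" using E_sets_nonempty by blast
  have "?F E \<le> gbar k l \<pi> f n y"
    unfolding gbar_def using Fb by (intro cSUP_upper[OF E] bdd_aboveI2) auto
  then show "measure ?\<nu> (cyl l y n) \<le> C * exp (- real n * P) * gbar k l \<pi> f n y"
    using up[OF E] gibbs_bounds_pos[OF b] by (smt (verit) ep mult_left_mono mult_pos_pos)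
qed

lemma image_cyl_bounds:
  assumes b: "gibbs_bounds k f \<mu> P C" and A: "A > 0"
    and ratio: "\<And>n y x. n \<ge> 1 \<Longrightarrow> y \<in> fullshift l \<Longrightarrow> x \<in> fullshift k \<Longrightarrow> \<pi> ` cyl k x n \<subseteq> cyl l y n \<Longrightarrow>
        1 / A \<le> gbar k l \<pi> f n y / (real (card (preimage_cyls k l \<pi> n y)) * exp (birkhoff f n x)) \<and>
        gbar k l \<pi> f n y / (real (card (preimage_cyls k l \<pi> n y)) * exp (birkhoff f n x)) \<le> A"
    and n: "n \<ge> 1" and z: "z \<in> fullshift l"
  defines "w \<equiv> exp (- real n * P + birkhoff (factor_potential k f \<phi>) n z)"
  shows "measure (distr \<mu> (shift_borel l) \<pi>) (cyl l z n) \<le> C * A * w"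
    "w \<le> C * A * measure (distr \<mu> (shift_borel l) \<pi>) (cyl l z n)"
proof -
  let ?\<nu> = "distr \<mu> (shift_borel l) \<pi>" and ?gbar = "gbar k l \<pi> f n z"
  define Q where "Q = exp (birkhoff (factor_potential k f \<phi>) n z)"
  define E where "E = exp (- real n * P)"
  have Q: "Q > 0" and E: "E > 0" by (simp_all add: Q_def E_def)
  have w: "w = E * Q" unfolding w_def E_def Q_def by (rule exp_add)
  have C: "C > 0" using gibbs_bounds_pos[OF b] .
  have "1 / A \<le> ?gbar / Q \<and> ?gbar / Q \<le> A"
    using ratio[OF n z lift_in_fullshift[OF z] factor_image_cyl_lift[OF z]]
    by (simp add: Q_def exp_birkhoff_factor_potential[OF z])
  then have g1: "Q \<le> A * ?gbar" and g2: "?gbar \<le> A * Q"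
    using Q A by (simp_all add: divide_le_eq le_divide_eq mult.commute)
  note gb = gbar_bounds[OF b z, of n, folded E_def]
  have "measure ?\<nu> (cyl l z n) \<le> C * E * ?gbar" by (rule gb(1))
  also have "\<dots> \<le> C * E * (A * Q)" using g2 C E by (intro mult_left_mono) auto
  finally show "measure ?\<nu> (cyl l z n) \<le> C * A * w" by (simp add: w algebra_simps)
  have "E * Q \<le> E * (A * ?gbar)" using g1 E by (intro mult_left_mono) auto
  also have "\<dots> = A * (E * ?gbar)" by (simp add: algebra_simps)
  also have "\<dots> \<le> A * (C * measure ?\<nu> (cyl l z n))" using gb(2) A by (intro mult_left_mono) auto
  finally show "w \<le> C * A * measure ?\<nu> (cyl l z n)" by (simp add: w algebra_simps)
qed

lemma image_inv_gibbs:
  assumes "\<exists>A>0. \<forall>n\<ge>1. \<forall>y\<in>fullshift l. \<forall>x\<in>fullshift k. \<pi> ` cyl k x n \<subseteq> cyl l y n \<longrightarrow>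
        1 / A \<le> gbar k l \<pi> f n y / (real (card (preimage_cyls k l \<pi> n y)) * exp (birkhoff f n x)) \<and>
        gbar k l \<pi> f n y / (real (card (preimage_cyls k l \<pi> n y)) * exp (birkhoff f n x)) \<le> A"
  shows "inv_gibbs l (factor_potential k f \<phi>) (distr \<mu> (shift_borel l) \<pi>)"
proof -
  let ?\<nu> = "distr \<mu> (shift_borel l) \<pi>" and ?g = "factor_potential k f \<phi>"
  obtain P C where b: "gibbs_bounds k f \<mu> P C" using inv_gibbsD(6)[OF gibbs] by blast
  obtain A where A: "A > 0" and ratio: "\<And>n y x. n \<ge> 1 \<Longrightarrow> y \<in> fullshift l \<Longrightarrow> x \<in> fullshift k \<Longrightarrow>
      \<pi> ` cyl k x n \<subseteq> cyl l y n \<Longrightarrow>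
        1 / A \<le> gbar k l \<pi> f n y / (real (card (preimage_cyls k l \<pi> n y)) * exp (birkhoff f n x)) \<and>
        gbar k l \<pi> f n y / (real (card (preimage_cyls k l \<pi> n y)) * exp (birkhoff f n x)) \<le> A"
    using assms by blast
  define C' where "C' = max 1 (C * A)"
  have "measure ?\<nu> (cyl l z n) \<le> C' * exp (- real n * P + birkhoff ?g n z) \<and>
      exp (- real n * P + birkhoff ?g n z) \<le> C' * measure ?\<nu> (cyl l z n)"
    if z: "z \<in> fullshift l" for z n
  proof (cases "n = 0")
      case True
    then show ?thesis
      using prob_space.prob_space[OF image_prob_space] by (simp add: C'_def birkhoff_def)
  next
    case False
    then have "n \<ge> 1" by simp
    note cyl_bounds = image_cyl_bounds[OF b A ratio this z]
    have "C * A \<le> C'" by (simp add: C'_def)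
    then show ?thesis using cyl_bounds measure_nonneg
      by (smt (verit, best) exp_gt_zero mult_right_mono)
  qed
  then have "gibbs_bounds l ?g ?\<nu> P C'" unfolding gibbs_bounds_def by (simp add: C'_def)
  then show ?thesis
    unfolding inv_gibbs_iff using image_prob_space image_shift_invariant by auto
qed

end

end

theorem proposition5p12:
  fixes k l :: nat and \<pi> :: "(nat \<Rightarrow> nat) \<Rightarrow> (nat \<Rightarrow> nat)"
    and f :: "(nat \<Rightarrow> nat) \<Rightarrow> real" and \<mu> :: "(nat \<Rightarrow> nat) measure"
  assumes fac: "one_block_factor k l \<pi>"
    and fBow: "f \<in> Bow k"
    and gibbs: "inv_gibbs k f \<mu>"
    and bound: "\<exists>A>0. \<forall>n\<ge>1. \<forall>y\<in>fullshift l. \<forall>x\<in>fullshift k. \<pi> ` cyl k x n \<subseteq> cyl l y n \<longrightarrow>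
        1 / A \<le> gbar k l \<pi> f n y / (real (card (preimage_cyls k l \<pi> n y)) * exp (birkhoff f n x)) \<and>
        gbar k l \<pi> f n y / (real (card (preimage_cyls k l \<pi> n y)) * exp (birkhoff f n x)) \<le> A"
  shows "\<exists>g. g \<in> Bow l \<and> inv_gibbs l g (distr \<mu> (shift_borel l) \<pi>) \<and>
           (\<forall>M. inv_gibbs l g M \<longrightarrow> M = distr \<mu> (shift_borel l) \<pi>)"
proof -
  obtain \<phi> where phi: "\<And>x i. x \<in> fullshift k \<Longrightarrow> \<pi> x i = \<phi> (x i)"
    using fac unfolding one_block_factor_def by blast
  have "inv_gibbs l (factor_potential k f \<phi>) (distr \<mu> (shift_borel l) \<pi>)"
    using image_inv_gibbs[OF fac phi gibbs bound] .
  moreover have "factor_potential k f \<phi> \<in> Bow l"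
    using factor_potential_Bow[OF fac phi fBow] .
  ultimately show ?thesis using gibbs_unique by blast
qed

end
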